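(* Let $\Gamma$ be a connected signed graph on $N$ vertices, and let $n_-(\Gamma), n_0(\Gamma), n_+(\Gamma)$ be the numbers of negative, zero and positive eigenvalues of its signed Laplacian $\mathcal{L}(\Gamma)$. Then for every choice of edge weights (with the given signs) one has \[ c(\Gamma_+)-1 \le n_+(\Gamma) \le N-c(\Gamma_-),\qquad c(\Gamma_-)-1 \le n_-(\Gamma) \le N-c(\Gamma_+),\qquad 1 \le n_0(\Gamma) \le N+2-c(\Gamma_-)-c(\Gamma_+). \] Moreover these bounds are tight: for any such graph (i.e. any fixed underlying graph and fixed assignment of signs to its edges) there exists a nonempty open set of weights (with these signs) for which $n_+(\Gamma)=c(\Gamma_+)-1$, $n_-(\Gamma)=N-c(\Gamma_+)$, $n_0(\Gamma)=1$, and there exists a nonempty open set of weights (with these signs) for which $n_+(\Gamma)=N-c(\Gamma_-)$, $n_-(\Gamma)=c(\Gamma_-)-1$, $n_0(\Gamma)=1$.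
   Context: A signed graph $\Gamma$ is a finite simple undirected graph with vertex set $V(\Gamma)=\{1,\dots,N\}$ in which every edge $\{i,j\}$ carries a nonzero real weight $\gamma_{ij}=\gamma_{ji}$, which may be of either sign; set $\gamma_{ij}=0$ if $i,j$ are not adjacent. The signed Laplacian $\mathcal{L}(\Gamma)$ is the symmetric $N\times N$ matrix with $\mathcal{L}(\Gamma)_{ij}=\gamma_{ij}$ for $i\neq j$ and $\mathcal{L}(\Gamma)_{ii}=-\sum_{k\neq i}\gamma_{ik}$. $\Gamma_+$ (resp. $\Gamma_-$) denotes the spanning subgraph with vertex set $V(\Gamma)$ whose edges are exactly the edges of $\Gamma$ with positive (resp. negative) weight. For a graph $H$, $c(H)$ denotes its number of connected components (isolated vertices count as components). Eigenvalues are counted with multiplicity. *)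

theory Defs
  imports "Jordan_Normal_Form.Char_Poly"
begin

text \<open>Vertices are 0,...,N-1. A weight function gamma is symmetric, zero off the edges.\<close>

definition signed_laplacian :: "nat \<Rightarrow> (nat \<Rightarrow> nat \<Rightarrow> real) \<Rightarrow> real mat" where
  "signed_laplacian N \<gamma> = mat N N (\<lambda>(i,j).
     if i = j then - (\<Sum>k\<in>{0..<N}-{i}. \<gamma> i k) else \<gamma> i j)"

definition n_pos :: "real mat \<Rightarrow> nat" where
  "n_pos A = (\<Sum>x\<in>{x. x > 0 \<and> poly (char_poly A) x = 0}. order x (char_poly A))"

definition n_neg :: "real mat \<Rightarrow> nat" where
  "n_neg A = (\<Sum>x\<in>{x. x < 0 \<and> poly (char_poly A) x = 0}. order x (char_poly A))"

definition n_zero :: "real mat \<Rightarrow> nat" where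
  "n_zero A = order 0 (char_poly A)"

definition simple_graph :: "nat \<Rightarrow> (nat \<Rightarrow> nat \<Rightarrow> bool) \<Rightarrow> bool" where
  "simple_graph N E \<longleftrightarrow> (\<forall>i j. E i j \<longrightarrow> i < N \<and> j < N \<and> i \<noteq> j \<and> E j i)"

definition graph_connected :: "nat \<Rightarrow> (nat \<Rightarrow> nat \<Rightarrow> bool) \<Rightarrow> bool" where
  "graph_connected N E \<longleftrightarrow> N > 0 \<and> (\<forall>i<N. \<forall>j<N. E\<^sup>*\<^sup>* i j)"

text \<open>Number of connected components of the spanning graph on {0..<N} with edges E
  (isolated vertices count).\<close>

definition num_components :: "nat \<Rightarrow> (nat \<Rightarrow> nat \<Rightarrow> bool) \<Rightarrow> nat" where
  "num_components N E = card ({0..<N} // {(i,j). E\<^sup>*\<^sup>* i j})"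

definition admissible_weights ::
  "(nat \<Rightarrow> nat \<Rightarrow> bool) \<Rightarrow> (nat \<Rightarrow> nat \<Rightarrow> bool) \<Rightarrow> (nat \<Rightarrow> nat \<Rightarrow> real) set" where
  "admissible_weights E \<sigma> = {\<gamma>. (\<forall>i j. \<gamma> i j = \<gamma> j i) \<and>
      (\<forall>i j. E i j \<longrightarrow> (\<sigma> i j \<longrightarrow> \<gamma> i j > 0) \<and> (\<not> \<sigma> i j \<longrightarrow> \<gamma> i j < 0)) \<and>
      (\<forall>i j. \<not> E i j \<longrightarrow> \<gamma> i j = 0)}"

definition weights_open ::
  "(nat \<Rightarrow> nat \<Rightarrow> bool) \<Rightarrow> (nat \<Rightarrow> nat \<Rightarrow> bool) \<Rightarrow> (nat \<Rightarrow> nat \<Rightarrow> real) set \<Rightarrow> bool" where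
  "weights_open E \<sigma> U \<longleftrightarrow> U \<subseteq> admissible_weights E \<sigma> \<and>
     (\<forall>\<gamma>\<in>U. \<exists>\<epsilon>>0. \<forall>\<gamma>'\<in>admissible_weights E \<sigma>.
        (\<forall>i j. E i j \<longrightarrow> \<bar>\<gamma>' i j - \<gamma> i j\<bar> < \<epsilon>) \<longrightarrow> \<gamma>' \<in> U)"

end

theory Submission
  imports Defs "Jordan_Normal_Form.Schur_Decomposition"
begin

text \<open>
  The quadratic form of the signed Laplacian is \<open>x\<^sup>T L x = - 1/2 \<Sum>\<^sub>i\<^sub>j \<gamma>\<^sub>i\<^sub>j (x\<^sub>i - x\<^sub>j)\<^sup>2\<close>, and the
  inertia of a real symmetric matrix is read off from subspaces on which its form is definite or
  semidefinite (via an orthogonal diagonalisation). On the \<open>c(\<Gamma>\<^sub>+)\<close>-dimensional space of vectors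
  constant on the components of \<open>\<Gamma>\<^sub>+\<close> only negative edges contribute, so the form is \<open>\<ge> 0\<close> and
  \<open>n\<^sub>- \<le> N - c(\<Gamma>\<^sub>+)\<close>. If such a vector also vanishes on the component of one vertex, the form is
  even \<open>> 0\<close> unless the vector is constant along all edges, hence zero by connectedness; so
  \<open>c(\<Gamma>\<^sub>+) - 1 \<le> n\<^sub>+\<close>. Negating all weights swaps \<open>\<Gamma>\<^sub>+\<close> with \<open>\<Gamma>\<^sub>-\<close> and \<open>n\<^sub>+\<close> with \<open>n\<^sub>-\<close>, which gives
  the other two bounds; the all-ones vector lies in the kernel, and \<open>n\<^sub>+ + n\<^sub>- + n\<^sub>0 = N\<close> gives
  the bounds on \<open>n\<^sub>0\<close>.

  For tightness, the unweighted Laplacian of \<open>\<Gamma>\<^sub>+\<close> has \<open>n\<^sub>- \<ge> N - c(\<Gamma>\<^sub>+)\<close>, and \<open>n\<^sub>-\<close> is lower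
  semicontinuous in the weights. Hence small negative weights on \<open>\<Gamma>\<^sub>-\<close> attain the bound
  \<open>n\<^sub>- = N - c(\<Gamma>\<^sub>+)\<close>, which then forces \<open>n\<^sub>+ = c(\<Gamma>\<^sub>+) - 1\<close> and \<open>n\<^sub>0 = 1\<close>, and the set of
  weights attaining it is open.
\<close>

section \<open>Orthogonal diagonalisation of real symmetric matrices\<close>

lemma real_symmetric_sesquilinear_form_real:
  fixes A :: "real mat" and v :: "complex vec"
  assumes sym: "\<And>i j. i < n \<Longrightarrow> j < n \<Longrightarrow> A $$ (i,j) = A $$ (j,i)"
  shows "Im (\<Sum>i<n. \<Sum>j<n. cnj (v $ i) * complex_of_real (A $$ (i,j)) * v $ j) = 0"
proof -
  define s where "s = (\<Sum>i<n. \<Sum>j<n. cnj (v $ i) * complex_of_real (A $$ (i,j)) * v $ j)"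
  have "cnj s = (\<Sum>i<n. \<Sum>j<n. v $ i * complex_of_real (A $$ (i,j)) * cnj (v $ j))"
    unfolding s_def by (simp add: cnj_sum)
  also have "\<dots> = (\<Sum>j<n. \<Sum>i<n. v $ i * complex_of_real (A $$ (i,j)) * cnj (v $ j))"
    by (rule sum.swap)
  also have "\<dots> = s" unfolding s_def
    by (auto intro!: sum.cong simp: sym mult.commute mult.left_commute)
  finally have "Im s = 0" by (metis cnj.simps(2) neg_equal_zero)
  then show ?thesis unfolding s_def .
qed

lemma symmetric_real_mat_has_eigenvalue:
  fixes A :: "real mat"
  assumes A: "A \<in> carrier_mat n n" and sym: "\<And>i j. i < n \<Longrightarrow> j < n \<Longrightarrow> A $$ (i,j) = A $$ (j,i)"
    and n: "n > 0"
  shows "\<exists>e. eigenvalue A e"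
proof -
  define Ac where "Ac = map_mat complex_of_real A"
  have Ac: "Ac \<in> carrier_mat n n" using A by (simp add: Ac_def)
  obtain as where cp: "char_poly Ac = (\<Prod>a \<leftarrow> as. [:- a, 1:])" and len: "length as = n"
    using char_poly_factorized[OF Ac] by blast
  define a where "a = as ! 0"
  have "a \<in> set as" using len n by (simp add: a_def)
  then have root: "poly (char_poly Ac) a = 0" unfolding cp
    by (induct as) auto
  then obtain v where "eigenvector Ac v a"
    using eigenvalue_root_char_poly[OF Ac] unfolding eigenvalue_def by blast
  then have v: "v \<in> carrier_vec n" and v0: "v \<noteq> 0\<^sub>v n" and Av: "Ac *\<^sub>v v = a \<cdot>\<^sub>v v"
    using Ac unfolding eigenvector_def by auto
  \<comment> \<open>\<open>a\<close> is the Rayleigh quotient \<open>v\<^sup>* A v / v\<^sup>* v\<close> of its complex eigenvector, hence real.\<close>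
  define s where "s = (\<Sum>i<n. \<Sum>j<n. cnj (v $ i) * complex_of_real (A $$ (i,j)) * v $ j)"
  define r where "r = (\<Sum>i<n. (cmod (v $ i))\<^sup>2)"
  have "s = (\<Sum>i<n. cnj (v $ i) * (Ac *\<^sub>v v) $ i)"
    unfolding s_def using A v
    by (auto simp: Ac_def scalar_prod_def sum_distrib_left mult.assoc lessThan_atLeast0 intro!: sum.cong)
  also have "\<dots> = (\<Sum>i<n. a * (cnj (v $ i) * v $ i))"
    using Av v by (auto simp: mult.commute mult.left_commute intro!: sum.cong)
  also have "\<dots> = a * complex_of_real r"
    unfolding r_def of_real_sum sum_distrib_left
    by (intro sum.cong refl) (metis complex_norm_square mult.commute)
  finally have s_eq: "s = a * complex_of_real r" .
  moreover have "Im s = 0" unfolding s_def by (rule real_symmetric_sesquilinear_form_real[OF sym])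
  moreover have "r > 0"
  proof -
    obtain i where i: "i < n" "v $ i \<noteq> 0" using v v0 by (metis eq_vecI carrier_vecD index_zero_vec)
    have "(cmod (v $ i))\<^sup>2 \<le> r" unfolding r_def by (rule member_le_sum) (use i in auto)
    moreover have "(cmod (v $ i))\<^sup>2 > 0" using i by simp
    ultimately show ?thesis by linarith
  qed
  ultimately have a_real: "a = complex_of_real (Re a)" using s_eq by (simp add: complex_eq_iff)
  have "char_poly Ac = map_poly complex_of_real (char_poly A)"
    unfolding Ac_def by (rule of_real_hom.char_poly_hom[OF A])
  then have "complex_of_real (poly (char_poly A) (Re a)) = 0"
    using root a_real by (metis of_real_hom.poly_map_poly)
  then have "poly (char_poly A) (Re a) = 0" by simp
  then show ?thesis using eigenvalue_root_char_poly[OF A] by blast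
qed

lemma orthonormal_basis_extension:
  fixes u :: "real vec"
  assumes u: "u \<in> carrier_vec n" and uu: "u \<bullet> u = 1"
  shows "\<exists>W. W \<in> carrier_mat n n \<and> transpose_mat W * W = 1\<^sub>m n \<and> col W 0 = u"
proof -
  interpret cof_vec_space n "TYPE(real)" .
  have u0: "u \<noteq> 0\<^sub>v n" using uu u by auto
  define b where "b = basis_completion u"
  define ws where "ws = gram_schmidt n b"
  from basis_completion[OF u u0, folded b_def]
  have dist_b: "distinct b" and indep: "\<not> lin_dep (set b)" and b: "set b \<subseteq> carrier_vec n"
    and hd_b: "hd b = u" and len_b: "length b = n" by auto
  have n: "n > 0" using u0 u by (cases n) auto
  from hd_b len_b n obtain vs where b_eq: "b = u # vs" by (cases b) auto
  from gram_schmidt_result[OF b dist_b indep refl, folded ws_def]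
  have ws: "set ws \<subseteq> carrier_vec n" "corthogonal ws" "length ws = n"
    by (auto simp: len_b)
  have "hd ws = u" using gram_schmidt_hd[OF u, of vs] unfolding ws_def b_eq .
  then have ws0: "ws ! 0 = u" using ws n by (cases ws) auto
  define ws' where "ws' = map (\<lambda>w. (1 / sqrt (w \<bullet> w)) \<cdot>\<^sub>v w) ws"
  define W where "W = mat_of_cols n ws'"
  have ws': "\<And>i. i < n \<Longrightarrow> ws' ! i \<in> carrier_vec n" "length ws' = n"
    using ws by (auto simp: ws'_def)
  have W: "W \<in> carrier_mat n n" using ws' unfolding W_def by (metis mat_of_cols_carrier(1))
  have col_W: "\<And>i. i < n \<Longrightarrow> col W i = ws' ! i" unfolding W_def using ws' by simp
  have pos: "ws ! i \<bullet> ws ! i > 0" if i: "i < n" for i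
  proof -
    have "ws ! i \<bullet> ws ! i \<noteq> 0" using corthogonalD[OF ws(2), of i i] i ws by auto
    moreover have "ws ! i \<bullet> ws ! i \<ge> 0" using conjugate_square_ge_0_vec[of "ws ! i"] by simp
    ultimately show ?thesis by linarith
  qed
  have orth: "ws' ! i \<bullet> ws' ! j = (if i = j then 1 else 0)" if i: "i < n" and j: "j < n" for i j
  proof -
    have "ws ! i \<in> carrier_vec n" "ws ! j \<in> carrier_vec n" using ws i j by auto
    then have "ws' ! i \<bullet> ws' ! j
        = (1 / sqrt (ws!i \<bullet> ws!i)) * (1 / sqrt (ws!j \<bullet> ws!j)) * (ws ! i \<bullet> ws ! j)"
      using i j ws by (simp add: ws'_def)
    also have "\<dots> = (if i = j then 1 else 0)"
    proof (cases "i = j")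
      case True
      then show ?thesis using pos[OF i] by (simp add: real_sqrt_mult[symmetric] del: real_sqrt_mult)
    next
      case False
      then show ?thesis using corthogonalD[OF ws(2), of i j] i j ws by auto
    qed
    finally show ?thesis .
  qed
  have "transpose_mat W * W = 1\<^sub>m n"
    by (rule eq_matI) (use W in \<open>auto simp: col_W orth\<close>)
  moreover have "col W 0 = u" using col_W n ws0 ws uu by (simp add: ws'_def)
  ultimately show ?thesis using W by blast
qed

lemma congruence_index:
  fixes W A :: "real mat"
  assumes W: "W \<in> carrier_mat n n" and A: "A \<in> carrier_mat n n" and i: "i < n" and j: "j < n"
  shows "(transpose_mat W * A * W) $$ (i,j) = col W i \<bullet> (A *\<^sub>v col W j)"
proof -
  have "transpose_mat W * A * W = transpose_mat W * (A * W)"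
    using W A by (simp add: assoc_mult_mat[of _ n n _ n _ n])
  moreover have "(transpose_mat W * (A * W)) $$ (i,j) = row (transpose_mat W) i \<bullet> col (A * W) j"
    using W A i j by (intro index_mult_mat(1)) auto
  moreover have "row (transpose_mat W) i = col W i" using W i by (intro row_transpose) auto
  moreover have "col (A * W) j = A *\<^sub>v col W j" using W A j by (intro col_mult2) auto
  ultimately show ?thesis by simp
qed

lemma symmetric_real_mat_unit_eigenvector:
  fixes A :: "real mat"
  assumes A: "A \<in> carrier_mat n n" and sym: "transpose_mat A = A" and n: "n > 0"
  shows "\<exists>e u. u \<in> carrier_vec n \<and> u \<bullet> u = 1 \<and> A *\<^sub>v u = e \<cdot>\<^sub>v u"
proof -
  have sym_idx: "\<And>i j. i < n \<Longrightarrow> j < n \<Longrightarrow> A $$ (i,j) = A $$ (j,i)"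
    using sym A by (metis carrier_matD index_transpose_mat(1))
  obtain e v where "eigenvector A v e"
    using symmetric_real_mat_has_eigenvalue[OF A sym_idx n] unfolding eigenvalue_def by blast
  then have v: "v \<in> carrier_vec n" and v0: "v \<noteq> 0\<^sub>v n" and Av: "A *\<^sub>v v = e \<cdot>\<^sub>v v"
    using A unfolding eigenvector_def by auto
  have "v \<bullet> v \<noteq> 0" using v v0 conjugate_square_eq_0_vec[OF v] by auto
  moreover have "v \<bullet> v \<ge> 0" using conjugate_square_ge_0_vec[of v] by simp
  ultimately have vv: "v \<bullet> v > 0" by linarith
  define u where "u = (1 / sqrt (v \<bullet> v)) \<cdot>\<^sub>v v"
  have "u \<in> carrier_vec n" using v by (simp add: u_def)
  moreover have "u \<bullet> u = 1"
    using v vv by (simp add: u_def real_sqrt_mult[symmetric] del: real_sqrt_mult)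
  moreover have "A *\<^sub>v u = e \<cdot>\<^sub>v u"
    using A v Av by (simp add: u_def mult_mat_vec smult_smult_assoc mult.commute)
  ultimately show ?thesis by blast
qed

lemma symmetric_deflation:
  fixes A :: "real mat"
  assumes A: "A \<in> carrier_mat (Suc m) (Suc m)" and sym: "transpose_mat A = A"
  shows "\<exists>W e B. W \<in> carrier_mat (Suc m) (Suc m) \<and> transpose_mat W * W = 1\<^sub>m (Suc m) \<and>
    B \<in> carrier_mat m m \<and> transpose_mat B = B \<and>
    transpose_mat W * A * W = four_block_mat (mat 1 1 (\<lambda>_. e)) (0\<^sub>m 1 m) (0\<^sub>m m 1) B"
proof -
  let ?n = "Suc m"
  obtain e u where u: "u \<in> carrier_vec ?n" and uu: "u \<bullet> u = 1" and Au: "A *\<^sub>v u = e \<cdot>\<^sub>v u"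
    using symmetric_real_mat_unit_eigenvector[OF A sym zero_less_Suc] by blast
  obtain W where W: "W \<in> carrier_mat ?n ?n" and WW: "transpose_mat W * W = 1\<^sub>m ?n"
    and W0: "col W 0 = u"
    using orthonormal_basis_extension[OF u uu] by blast
  define A' where "A' = transpose_mat W * A * W"
  have A': "A' \<in> carrier_mat ?n ?n" using W A by (simp add: A'_def)
  have sym_A': "transpose_mat A' = A'"
    unfolding A'_def using W A sym
    by (simp add: transpose_mult[of _ ?n ?n _ ?n] assoc_mult_mat[of _ ?n ?n _ ?n _ ?n])
  then have sym_idx': "\<And>i j. i < ?n \<Longrightarrow> j < ?n \<Longrightarrow> A' $$ (i,j) = A' $$ (j,i)"
    using A' by (metis carrier_matD index_transpose_mat(1))
  have col0: "A' $$ (i,0) = (if i = 0 then e else 0)" if i: "i < ?n" for i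
  proof -
    have "A' $$ (i,0) = col W i \<bullet> (e \<cdot>\<^sub>v col W 0)"
      using congruence_index[OF W A i, of 0] W0 Au by (simp add: A'_def)
    also have "\<dots> = e * (col W i \<bullet> col W 0)" using W i by simp
    finally have "A' $$ (i,0) = e * (col W i \<bullet> col W 0)" .
    moreover have "col W i \<bullet> col W 0 = (transpose_mat W * W) $$ (i,0)" using W i by simp
    ultimately show ?thesis using WW i by simp
  qed
  define B where "B = mat m m (\<lambda>(i,j). A' $$ (Suc i, Suc j))"
  have B: "B \<in> carrier_mat m m" by (simp add: B_def)
  have "transpose_mat B = B" by (rule eq_matI) (auto simp: B_def sym_idx')
  moreover have "A' = four_block_mat (mat 1 1 (\<lambda>_. e)) (0\<^sub>m 1 m) (0\<^sub>m m 1) B"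
  proof (rule eq_matI)
    fix i j assume "i < dim_row (four_block_mat (mat 1 1 (\<lambda>_. e)) (0\<^sub>m 1 m) (0\<^sub>m m 1) B)"
      "j < dim_col (four_block_mat (mat 1 1 (\<lambda>_. e)) (0\<^sub>m 1 m) (0\<^sub>m m 1) B)"
    then have "i < ?n" "j < ?n" using B by auto
    then show "A' $$ (i, j) = four_block_mat (mat 1 1 (\<lambda>_. e)) (0\<^sub>m 1 m) (0\<^sub>m m 1) B $$ (i, j)"
      using col0 sym_idx' B by (auto simp: B_def) (metis col0 sym_idx' less_not_refl2 zero_less_Suc)+
  qed (use A' B in auto)
  ultimately show ?thesis using W WW B unfolding A'_def by blast
qed

lemma orthogonal_block_extension:
  fixes Q B E :: "real mat"
  assumes Q: "Q \<in> carrier_mat m m" and QQ: "transpose_mat Q * Q = 1\<^sub>m m"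
    and B: "B \<in> carrier_mat m m" and E: "E \<in> carrier_mat 1 1"
  defines "Q' \<equiv> four_block_mat (1\<^sub>m 1) (0\<^sub>m 1 m) (0\<^sub>m m 1) Q"
  shows "Q' \<in> carrier_mat (Suc m) (Suc m)" and "transpose_mat Q' * Q' = 1\<^sub>m (Suc m)"
    and "transpose_mat Q' * four_block_mat E (0\<^sub>m 1 m) (0\<^sub>m m 1) B * Q'
       = four_block_mat E (0\<^sub>m 1 m) (0\<^sub>m m 1) (transpose_mat Q * B * Q)"
proof -
  have c1: "(1\<^sub>m 1 :: real mat) \<in> carrier_mat 1 1" and c2: "(0\<^sub>m 1 m :: real mat) \<in> carrier_mat 1 m"
    and c3: "(0\<^sub>m m 1 :: real mat) \<in> carrier_mat m 1" and Qt: "transpose_mat Q \<in> carrier_mat m m"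
    using Q by auto
  have Q't: "transpose_mat Q' = four_block_mat (1\<^sub>m 1) (0\<^sub>m 1 m) (0\<^sub>m m 1) (transpose_mat Q)"
    unfolding Q'_def using Q by (simp add: transpose_four_block_mat[of _ 1 1 _ m _ m])
  show "Q' \<in> carrier_mat (Suc m) (Suc m)"
    using four_block_carrier_mat[OF c1 Q] by (simp add: Q'_def)
  show "transpose_mat Q' * Q' = 1\<^sub>m (Suc m)"
    unfolding Q't unfolding Q'_def mult_four_block_mat[OF c1 c2 c3 Qt c1 c2 c3 Q] using Q
    by (auto simp: QQ)
  have "transpose_mat Q' * four_block_mat E (0\<^sub>m 1 m) (0\<^sub>m m 1) B
      = four_block_mat E (0\<^sub>m 1 m) (0\<^sub>m m 1) (transpose_mat Q * B)"
    unfolding Q't mult_four_block_mat[OF c1 c2 c3 Qt E c2 c3 B] using Q B E by auto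
  then show "transpose_mat Q' * four_block_mat E (0\<^sub>m 1 m) (0\<^sub>m m 1) B * Q'
       = four_block_mat E (0\<^sub>m 1 m) (0\<^sub>m m 1) (transpose_mat Q * B * Q)"
    unfolding Q'_def using Q B E mult_four_block_mat[OF E c2 c3 _ c1 c2 c3 Q, of "transpose_mat Q * B"]
    by auto
qed

theorem symmetric_orthogonal_diagonalization:
  fixes A :: "real mat"
  assumes "A \<in> carrier_mat n n" "transpose_mat A = A"
  shows "\<exists>Q f. Q \<in> carrier_mat n n \<and> transpose_mat Q * Q = 1\<^sub>m n \<and>
    transpose_mat Q * A * Q = mat_diag n f"
  using assms
proof (induct n arbitrary: A)
  case 0
  show ?case by (intro exI[of _ "1\<^sub>m 0"] exI[of _ "\<lambda>_. 0"]) (auto intro!: eq_matI simp: mat_diag_def)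
next
  case (Suc m A)
  let ?n = "Suc m"
  obtain W e B where W: "W \<in> carrier_mat ?n ?n" and WW: "transpose_mat W * W = 1\<^sub>m ?n"
    and B: "B \<in> carrier_mat m m" "transpose_mat B = B"
    and WAW: "transpose_mat W * A * W = four_block_mat (mat 1 1 (\<lambda>_. e)) (0\<^sub>m 1 m) (0\<^sub>m m 1) B"
    using symmetric_deflation[OF Suc(2,3)] by blast
  obtain Q f where Q: "Q \<in> carrier_mat m m" and QQ: "transpose_mat Q * Q = 1\<^sub>m m"
    and QBQ: "transpose_mat Q * B * Q = mat_diag m f"
    using Suc(1)[OF B] by blast
  define Q' where "Q' = four_block_mat (1\<^sub>m 1) (0\<^sub>m 1 m) (0\<^sub>m m 1) Q"
  have E: "mat 1 1 (\<lambda>_. e) \<in> carrier_mat 1 1" by simp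
  note ext = orthogonal_block_extension[OF Q QQ B(1) E, folded Q'_def]
  have "transpose_mat (W * Q') * (W * Q') = transpose_mat Q' * (transpose_mat W * W) * Q'"
    using W ext(1) by (simp add: transpose_mult[of _ ?n ?n _ ?n] assoc_mult_mat[of _ ?n ?n _ ?n _ ?n])
  then have orth: "transpose_mat (W * Q') * (W * Q') = 1\<^sub>m ?n" using WW ext(1,2) by simp
  have "transpose_mat (W * Q') * A * (W * Q') = transpose_mat Q' * (transpose_mat W * A * W) * Q'"
    using W ext(1) Suc(2)
    by (simp add: transpose_mult[of _ ?n ?n _ ?n] assoc_mult_mat[of _ ?n ?n _ ?n _ ?n])
  also have "\<dots> = four_block_mat (mat 1 1 (\<lambda>_. e)) (0\<^sub>m 1 m) (0\<^sub>m m 1) (mat_diag m f)"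
    unfolding WAW ext(3) QBQ ..
  also have "\<dots> = mat_diag ?n (\<lambda>i. if i = 0 then e else f (i - 1))"
    by (rule eq_matI) (auto simp: mat_diag_def)
  finally have "transpose_mat (W * Q') * A * (W * Q') = mat_diag ?n (\<lambda>i. if i = 0 then e else f (i - 1))" .
  moreover have "W * Q' \<in> carrier_mat ?n ?n" using W ext(1) by simp
  ultimately show ?case using orth by blast
qed

section \<open>Inertia and quadratic forms\<close>

lemma order_linear_factor: "Polynomial.order x [:-a, 1:] = (if x = a then 1 else (0::nat))"
  using order_power_n_n[of a 1] by (simp add: order_0I)

lemma prod_linear_factors:
  fixes f :: "nat \<Rightarrow> 'a :: idom" and n :: nat
  defines "p \<equiv> prod_list (map (\<lambda>a. [:- a, 1:]) (map f [0..<n]))"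
  shows "p \<noteq> 0" and "Polynomial.order x p = card {i. i < n \<and> f i = x}"
    and "poly p x = 0 \<longleftrightarrow> (\<exists>i<n. f i = x)"
  unfolding p_def
proof (induct n)
  case 0
  { case 1 show ?case by simp }
  { case 2 show ?case by simp }
  { case 3 show ?case by simp }
next
  case (Suc n)
  let ?p = "prod_list (map (\<lambda>a. [:- a, 1:]) (map f [0..<n]))"
  have eq: "prod_list (map (\<lambda>a. [:- a, 1:]) (map f [0..<Suc n])) = ?p * [:- f n, 1:]" by simp
  have "{i. i < Suc n \<and> f i = x} = {i. i < n \<and> f i = x} \<union> (if f n = x then {n} else {})"
    by (auto simp: less_Suc_eq)
  then have card: "card {i. i < Suc n \<and> f i = x} = card {i. i < n \<and> f i = x} + (if f n = x then 1 else 0)"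
    by auto
  have nz: "?p * [:- f n, 1:] \<noteq> 0" using Suc(1) by (metis mult_eq_0_iff pCons_eq_0_iff one_neq_zero)
  { case 1 show ?case unfolding eq by (rule nz) }
  { case 2 show ?case unfolding eq order_mult[OF nz] using Suc(2) card
      by (simp add: order_linear_factor eq_commute[of x]) }
  { case 3 show ?case unfolding eq using Suc(3) by (auto simp: less_Suc_eq) }
qed

lemma sum_order_prod_linear_factors:
  fixes f :: "nat \<Rightarrow> 'a :: idom" and n :: nat
  defines "p \<equiv> prod_list (map (\<lambda>a. [:- a, 1:]) (map f [0..<n]))"
  shows "(\<Sum>x\<in>{x. P x \<and> poly p x = 0}. Polynomial.order x p) = card {i. i < n \<and> P (f i)}"
proof -
  let ?I = "{i. i < n \<and> P (f i)}"
  have "{x. P x \<and> poly p x = 0} = f ` ?I"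
    using prod_linear_factors(3)[where f = f and n = n] unfolding p_def by auto
  then have "(\<Sum>x\<in>{x. P x \<and> poly p x = 0}. Polynomial.order x p) = (\<Sum>x\<in>f ` ?I. card {i \<in> ?I. f i = x})"
    using prod_linear_factors(2)[where f = f and n = n] unfolding p_def
    by (intro sum.cong) (auto intro!: arg_cong[where f = card])
  also have "\<dots> = (\<Sum>x\<in>f ` ?I. \<Sum>i\<in>{i \<in> ?I. f i = x}. 1)" by simp
  also have "\<dots> = card ?I" by (subst sum.group) auto
  finally show ?thesis .
qed

lemma card_filter_add_card_filter_not: "card {k. k < n \<and> P k} + card {k. k < n \<and> \<not> P k} = n"
proof -
  have "card ({k. k < n \<and> P k} \<union> {k. k < n \<and> \<not> P k}) = card {k. k < n \<and> P k} + card {k. k < n \<and> \<not> P k}"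
    by (rule card_Un_disjoint) auto
  moreover have "{k. k < n \<and> P k} \<union> {k. k < n \<and> \<not> P k} = {..<n}" by auto
  ultimately show ?thesis by simp
qed

lemma sum_swap3:
  "(\<Sum>i\<in>I. \<Sum>j\<in>J. \<Sum>k\<in>K. g i j k) = (\<Sum>k\<in>K. \<Sum>i\<in>I. \<Sum>j\<in>J. g i j k)"
  by (simp add: sum.swap[of _ J K] sum.swap[of _ I K])

definition quad_form :: "nat \<Rightarrow> real mat \<Rightarrow> (nat \<Rightarrow> real) \<Rightarrow> real" where
  "quad_form n A x = (\<Sum>i<n. \<Sum>j<n. A $$ (i,j) * x i * x j)"

definition sq_norm :: "nat \<Rightarrow> (nat \<Rightarrow> real) \<Rightarrow> real" where
  "sq_norm n x = (\<Sum>i<n. (x i)\<^sup>2)"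

lemma sum_squares_pos:
  assumes "finite T" "j \<in> T" "c j \<noteq> (0::real)"
  shows "(\<Sum>k\<in>T. (c k)\<^sup>2) > 0"
proof -
  have "(c j)\<^sup>2 \<le> (\<Sum>k\<in>T. (c k)\<^sup>2)" by (rule member_le_sum) (use assms in auto)
  moreover have "(c j)\<^sup>2 > 0" using assms by simp
  ultimately show ?thesis by linarith
qed

locale orthogonal_diagonalization =
  fixes n :: nat and A Q :: "real mat" and f :: "nat \<Rightarrow> real"
  assumes A_carrier: "A \<in> carrier_mat n n" and Q_carrier: "Q \<in> carrier_mat n n"
    and orthogonal: "transpose_mat Q * Q = 1\<^sub>m n"
    and diagonalizes: "transpose_mat Q * A * Q = mat_diag n f"
begin

lemma orthogonal_right: "Q * transpose_mat Q = 1\<^sub>m n"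
  using mat_mult_left_right_inverse[OF _ Q_carrier orthogonal] Q_carrier by simp

lemma A_spectral: "A = Q * mat_diag n f * transpose_mat Q"
proof -
  have "Q * mat_diag n f * transpose_mat Q = (Q * transpose_mat Q) * A * (Q * transpose_mat Q)"
    unfolding diagonalizes[symmetric] using A_carrier Q_carrier
    by (simp add: assoc_mult_mat[of _ n n _ n _ n])
  then show ?thesis using orthogonal_right A_carrier by simp
qed

lemma char_poly_eq: "char_poly A = prod_list (map (\<lambda>a. [:- a, 1:]) (map f [0..<n]))"
proof -
  have "similar_mat A (mat_diag n f)"
    unfolding similar_mat_def similar_mat_wit_def
    using A_spectral orthogonal orthogonal_right A_carrier Q_carrier
    by (intro exI[of _ Q] exI[of _ "transpose_mat Q"]) (auto simp: Let_def)
  then have "char_poly A = char_poly (mat_diag n f)" by (rule char_poly_similar)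
  also have "\<dots> = prod_list (map (\<lambda>a. [:- a, 1:]) (diag_mat (mat_diag n f)))"
    by (rule char_poly_upper_triangular) (auto simp: upper_triangular_def mat_diag_def)
  also have "diag_mat (mat_diag n f) = map f [0..<n]"
    by (auto simp: diag_mat_def mat_diag_def intro!: nth_equalityI)
  finally show ?thesis .
qed

lemma n_pos_eq: "n_pos A = card {k. k < n \<and> f k > 0}"
  and n_neg_eq: "n_neg A = card {k. k < n \<and> f k < 0}"
  and n_zero_eq: "n_zero A = card {k. k < n \<and> f k = 0}"
  unfolding n_pos_def n_neg_def n_zero_def char_poly_eq
    by (rule sum_order_prod_linear_factors[where P = "\<lambda>x. x > 0"],
        rule sum_order_prod_linear_factors[where P = "\<lambda>x. x < 0"],
        rule prod_linear_factors(2)[where x = 0])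

definition coord :: "(nat \<Rightarrow> real) \<Rightarrow> nat \<Rightarrow> real" where
  "coord x k = (\<Sum>i<n. Q $$ (i,k) * x i)"

lemma coord_sum:
  "finite J \<Longrightarrow> coord (\<lambda>i. \<Sum>j\<in>J. c j * v j i) k = (\<Sum>j\<in>J. c j * coord (v j) k)"
  unfolding coord_def sum_distrib_left
  by (subst sum.swap) (simp add: mult.left_commute)

lemma orthonormal_rows:
  "i < n \<Longrightarrow> j < n \<Longrightarrow> (\<Sum>k<n. Q $$ (i,k) * Q $$ (j,k)) = (if i = j then 1 else 0)"
  using arg_cong[OF orthogonal_right, of "\<lambda>M. M $$ (i,j)"] Q_carrier
  by (simp add: scalar_prod_def lessThan_atLeast0)

lemma orthonormal_cols:
  "i < n \<Longrightarrow> j < n \<Longrightarrow> (\<Sum>k<n. Q $$ (k,i) * Q $$ (k,j)) = (if i = j then 1 else 0)"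
  using arg_cong[OF orthogonal, of "\<lambda>M. M $$ (i,j)"] Q_carrier
  by (simp add: scalar_prod_def lessThan_atLeast0)

lemma A_index_spectral: "i < n \<Longrightarrow> j < n \<Longrightarrow> A $$ (i,j) = (\<Sum>k<n. Q $$ (i,k) * f k * Q $$ (j,k))"
  by (subst A_spectral) (use Q_carrier in \<open>simp add: mat_diag_mult_right[OF Q_carrier] scalar_prod_def
      lessThan_atLeast0\<close>)

lemma coord_square: "(coord x k)\<^sup>2 = (\<Sum>i<n. \<Sum>j<n. Q $$ (i,k) * Q $$ (j,k) * (x i * x j))"
  unfolding coord_def power2_eq_square sum_product by (simp add: mult_ac)

lemma quad_form_coord: "quad_form n A x = (\<Sum>k<n. f k * (coord x k)\<^sup>2)"
proof -
  have "quad_form n A x = (\<Sum>i<n. \<Sum>j<n. \<Sum>k<n. Q $$ (i,k) * f k * Q $$ (j,k) * x i * x j)"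
    unfolding quad_form_def by (intro sum.cong refl) (simp add: A_index_spectral sum_distrib_right)
  also have "\<dots> = (\<Sum>k<n. \<Sum>i<n. \<Sum>j<n. Q $$ (i,k) * f k * Q $$ (j,k) * x i * x j)"
    by (rule sum_swap3)
  also have "\<dots> = (\<Sum>k<n. f k * (coord x k)\<^sup>2)"
    by (simp add: coord_square sum_distrib_left mult_ac)
  finally show ?thesis .
qed

lemma coord_expansion: "i < n \<Longrightarrow> x i = (\<Sum>k<n. Q $$ (i,k) * coord x k)"
proof -
  assume i: "i < n"
  have "(\<Sum>k<n. Q $$ (i,k) * coord x k) = (\<Sum>j<n. (\<Sum>k<n. Q $$ (i,k) * Q $$ (j,k)) * x j)"
    unfolding coord_def sum_distrib_left sum_distrib_right
    by (subst sum.swap) (simp add: mult.assoc)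
  also have "\<dots> = (\<Sum>j<n. if i = j then x j else 0)"
    by (intro sum.cong refl) (simp add: orthonormal_rows i)
  also have "\<dots> = x i" using i by simp
  finally show ?thesis by simp
qed

lemma sq_norm_coord: "sq_norm n x = (\<Sum>k<n. (coord x k)\<^sup>2)"
proof -
  have "(\<Sum>k<n. (coord x k)\<^sup>2) = (\<Sum>k<n. \<Sum>i<n. \<Sum>j<n. Q $$ (i,k) * Q $$ (j,k) * (x i * x j))"
    by (simp add: coord_square)
  also have "\<dots> = (\<Sum>i<n. \<Sum>j<n. \<Sum>k<n. Q $$ (i,k) * Q $$ (j,k) * (x i * x j))"
    by (rule sum_swap3[symmetric])
  also have "\<dots> = (\<Sum>i<n. \<Sum>j<n. (\<Sum>k<n. Q $$ (i,k) * Q $$ (j,k)) * (x i * x j))"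
    by (simp add: sum_distrib_right)
  also have "\<dots> = (\<Sum>i<n. \<Sum>j<n. if i = j then x i * x j else 0)"
    by (intro sum.cong refl) (simp add: orthonormal_rows)
  also have "\<dots> = (\<Sum>i<n. x i * x i)" by simp
  finally show ?thesis by (simp add: sq_norm_def power2_eq_square)
qed

lemma coord_eigen_comb:
  assumes T: "T \<subseteq> {..<n}" and k: "k < n"
  shows "coord (\<lambda>i. \<Sum>l\<in>T. c l * Q $$ (i,l)) k = (if k \<in> T then c k else 0)"
proof -
  have fT: "finite T" using T finite_subset by blast
  have "coord (\<lambda>i. \<Sum>l\<in>T. c l * Q $$ (i,l)) k = (\<Sum>l\<in>T. c l * coord (\<lambda>i. Q $$ (i,l)) k)"
    by (rule coord_sum[OF fT])
  also have "\<dots> = (\<Sum>l\<in>T. (if k = l then c l else 0))"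
    using T k by (intro sum.cong refl) (auto simp: orthonormal_cols coord_def)
  also have "\<dots> = (if k \<in> T then c k else 0)"
    using fT by (simp add: sum.delta)
  finally show ?thesis .
qed

lemma
  fixes c :: "nat \<Rightarrow> real"
  assumes T: "T \<subseteq> {..<n}"
  defines "x \<equiv> (\<lambda>i. \<Sum>l\<in>T. c l * Q $$ (i,l))"
  shows quad_form_eigen_comb: "quad_form n A x = (\<Sum>k\<in>T. f k * (c k)\<^sup>2)"
    and sq_norm_eigen_comb: "sq_norm n x = (\<Sum>k\<in>T. (c k)\<^sup>2)"
proof -
  have "(\<Sum>k<n. g k * (coord x k)\<^sup>2) = (\<Sum>k\<in>T. g k * (c k)\<^sup>2)" for g
  proof -
    have "(\<Sum>k<n. g k * (coord x k)\<^sup>2) = (\<Sum>k<n. if k \<in> T then g k * (c k)\<^sup>2 else 0)"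
      unfolding x_def by (intro sum.cong refl) (simp add: coord_eigen_comb[OF T])
    also have "\<dots> = (\<Sum>k\<in>{k \<in> {..<n}. k \<in> T}. g k * (c k)\<^sup>2)"
      using sum.inter_filter[of "{..<n}" "\<lambda>k. g k * (c k)\<^sup>2" "\<lambda>k. k \<in> T"] by simp
    also have "{k \<in> {..<n}. k \<in> T} = T" using T by blast
    finally show ?thesis .
  qed
  from this[of f] this[of "\<lambda>_. 1"] show "quad_form n A x = (\<Sum>k\<in>T. f k * (c k)\<^sup>2)"
    and "sq_norm n x = (\<Sum>k\<in>T. (c k)\<^sup>2)"
    by (simp_all add: quad_form_coord sq_norm_coord)
qed

lemma quad_form_eigen_comb_le:
  fixes c :: "nat \<Rightarrow> real"
  assumes T: "T \<subseteq> {..<n}" and le: "\<And>k. k \<in> T \<Longrightarrow> f k \<le> \<mu>"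
  defines "x \<equiv> (\<lambda>i. \<Sum>l\<in>T. c l * Q $$ (i,l))"
  shows "quad_form n A x \<le> \<mu> * sq_norm n x"
proof -
  have "(\<Sum>k\<in>T. f k * (c k)\<^sup>2) \<le> (\<Sum>k\<in>T. \<mu> * (c k)\<^sup>2)"
    by (rule sum_mono) (simp add: le mult_right_mono)
  then show ?thesis
    unfolding x_def quad_form_eigen_comb[OF T] sq_norm_eigen_comb[OF T] by (simp add: sum_distrib_left)
qed

end

lemma underdetermined_system_nat:
  fixes w :: "nat \<Rightarrow> nat \<Rightarrow> real"
  assumes mk: "m < k"
  shows "\<exists>c. (\<exists>j<k. c j \<noteq> 0) \<and> (\<forall>r<m. (\<Sum>j<k. c j * w r j) = 0)"
proof -
  \<comment> \<open>Row \<open>m\<close> of \<open>M\<close> vanishes, so \<open>M\<close> has a kernel vector; it solves the equations in rows \<open>< m\<close>.\<close>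
  define M where "M = mat\<^sub>r k k (\<lambda>r. if r = m then 0\<^sub>v k else vec k (\<lambda>j. w r j))"
  have M: "M \<in> carrier_mat k k" by (simp add: M_def)
  have "det M = 0" unfolding M_def by (rule det_row_0[OF mk]) auto
  then obtain v where v: "v \<in> carrier_vec k" "v \<noteq> 0\<^sub>v k" "M *\<^sub>v v = 0\<^sub>v k"
    using det_0_iff_vec_prod_zero[OF M] by blast
  have "\<exists>j<k. v $ j \<noteq> 0" using v by (metis eq_vecI carrier_vecD index_zero_vec)
  moreover have "(\<Sum>j<k. v $ j * w r j) = 0" if r: "r < m" for r
  proof -
    have "(M *\<^sub>v v) $ r = 0" using v r mk by simp
    moreover have "(M *\<^sub>v v) $ r = row M r \<bullet> v" using M r mk by simp
    moreover have "row M r = vec k (\<lambda>j. w r j)" using r mk by (simp add: M_def)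
    ultimately show ?thesis using v by (simp add: scalar_prod_def lessThan_atLeast0 mult.commute)
  qed
  ultimately show ?thesis by blast
qed

lemma underdetermined_system:
  fixes w :: "'j \<Rightarrow> 's \<Rightarrow> real"
  assumes J: "finite J" and S: "finite S" and lt: "card S < card J"
  shows "\<exists>c. (\<exists>j\<in>J. c j \<noteq> 0) \<and> (\<forall>s\<in>S. (\<Sum>j\<in>J. c j * w j s) = 0)"
proof -
  obtain hJ where hJ: "bij_betw hJ {..<card J} J"
    using ex_bij_betw_nat_finite[OF J] by (auto simp: lessThan_atLeast0)
  obtain hS where hS: "bij_betw hS {..<card S} S"
    using ex_bij_betw_nat_finite[OF S] by (auto simp: lessThan_atLeast0)
  obtain c where c: "\<exists>j<card J. c j \<noteq> 0" and c0: "\<forall>r<card S. (\<Sum>j<card J. c j * w (hJ j) (hS r)) = 0"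
    using underdetermined_system_nat[OF lt, of "\<lambda>r j. w (hJ j) (hS r)"] by blast
  define c' where "c' = c \<circ> the_inv_into {..<card J} hJ"
  have c'_hJ: "c' (hJ j) = c j" if "j < card J" for j
    unfolding c'_def using hJ that by (simp add: bij_betw_def the_inv_into_f_f)
  have sum_eq: "(\<Sum>j\<in>J. c' j * w j s) = (\<Sum>j<card J. c j * w (hJ j) s)" for s
  proof -
    have "(\<Sum>j\<in>J. c' j * w j s) = (\<Sum>j<card J. c' (hJ j) * w (hJ j) s)"
      by (rule sum.reindex_bij_betw[OF hJ, symmetric])
    also have "\<dots> = (\<Sum>j<card J. c j * w (hJ j) s)" by (simp add: c'_hJ)
    finally show ?thesis .
  qed
  have "\<exists>j\<in>J. c' j \<noteq> 0"
  proof -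
    obtain j where "j < card J" "c j \<noteq> 0" using c by blast
    then show ?thesis using c'_hJ hJ by (metis bij_betwE lessThan_iff)
  qed
  moreover have "\<forall>s\<in>S. (\<Sum>j\<in>J. c' j * w j s) = 0"
  proof
    fix s assume "s \<in> S"
    then obtain r where "r < card S" "s = hS r" using hS by (metis bij_betw_iff_bijections lessThan_iff)
    then show "(\<Sum>j\<in>J. c' j * w j s) = 0" using c0 sum_eq by simp
  qed
  ultimately show ?thesis by blast
qed

context orthogonal_diagonalization
begin

lemma card_le_card_neg_eigenvalues:
  fixes v :: "'j \<Rightarrow> nat \<Rightarrow> real"
  assumes J: "finite J"
    and neg: "\<And>c. \<exists>j\<in>J. c j \<noteq> 0 \<Longrightarrow> quad_form n A (\<lambda>i. \<Sum>j\<in>J. c j * v j i) < 0"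
  shows "card J \<le> card {k. k < n \<and> f k < 0}"
proof (rule ccontr)
  assume "\<not> ?thesis"
  then have lt: "card {k. k < n \<and> f k < 0} < card J" by simp
  obtain c where c: "\<exists>j\<in>J. c j \<noteq> 0"
    and c0: "\<forall>k\<in>{k. k < n \<and> f k < 0}. (\<Sum>j\<in>J. c j * coord (v j) k) = 0"
    using underdetermined_system[OF J _ lt, of "\<lambda>j k. coord (v j) k"] by auto
  have "0 \<le> quad_form n A (\<lambda>i. \<Sum>j\<in>J. c j * v j i)"
    unfolding quad_form_coord coord_sum[OF J]
  proof (rule sum_nonneg)
    fix k assume "k \<in> {..<n}"
    then show "0 \<le> f k * (\<Sum>j\<in>J. c j * coord (v j) k)\<^sup>2" using c0 by (cases "f k < 0") auto
  qed
  with neg[OF c] show False by simp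
qed

lemma card_le_card_nonneg_eigenvalues:
  fixes v :: "'j \<Rightarrow> nat \<Rightarrow> real"
  assumes J: "finite J"
    and indep: "\<And>c. \<forall>i<n. (\<Sum>j\<in>J. c j * v j i) = 0 \<Longrightarrow> \<forall>j\<in>J. c j = 0"
    and nonneg: "\<And>c. quad_form n A (\<lambda>i. \<Sum>j\<in>J. c j * v j i) \<ge> 0"
  shows "card J \<le> card {k. k < n \<and> f k \<ge> 0}"
proof (rule ccontr)
  assume "\<not> ?thesis"
  then have lt: "card {k. k < n \<and> f k \<ge> 0} < card J" by simp
  obtain c where c: "\<exists>j\<in>J. c j \<noteq> 0"
    and c0: "\<forall>k\<in>{k. k < n \<and> f k \<ge> 0}. (\<Sum>j\<in>J. c j * coord (v j) k) = 0"
    using underdetermined_system[OF J _ lt, of "\<lambda>j k. coord (v j) k"] by auto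
  define x where "x = (\<lambda>i. \<Sum>j\<in>J. c j * v j i)"
  have y0: "coord x k = 0" if "k < n" "f k \<ge> 0" for k
    using c0 that by (simp add: x_def coord_sum[OF J])
  have term_nonpos: "f k * (coord x k)\<^sup>2 \<le> 0" if "k \<in> {..<n}" for k
    using y0[of k] that by (cases "f k \<ge> 0") (auto simp: mult_nonpos_nonneg)
  \<comment> \<open>Only the negative eigenvalues contribute, so a nonnegative value forces all coordinates to vanish.\<close>
  have "(\<Sum>k<n. f k * (coord x k)\<^sup>2) \<le> 0" using term_nonpos by (rule sum_nonpos)
  moreover have "(\<Sum>k<n. f k * (coord x k)\<^sup>2) \<ge> 0"
    using nonneg[of c, folded x_def] unfolding quad_form_coord .
  ultimately have "(\<Sum>k<n. - (f k * (coord x k)\<^sup>2)) = 0" by (simp add: sum_negf)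
  then have zero: "f k * (coord x k)\<^sup>2 = 0" if "k < n" for k
    using that term_nonpos by (subst (asm) sum_nonneg_eq_0_iff) auto
  have "coord x k = 0" if "k < n" for k
    using zero[OF that] y0[OF that] by (cases "f k = 0") auto
  then have "\<forall>i<n. x i = 0" using coord_expansion[of _ x] by simp
  then show False using indep c unfolding x_def by blast
qed

lemma card_nonneg_eigenvalues_le:
  assumes P: "finite P"
    and vanish: "\<And>x. quad_form n A x \<ge> 0 \<Longrightarrow> \<forall>p\<in>P. x p = 0 \<Longrightarrow> \<forall>i<n. x i = 0"
  shows "card {k. k < n \<and> f k \<ge> 0} \<le> card P"
proof (rule ccontr)
  define T where "T = {k. k < n \<and> f k \<ge> 0}"
  have T: "T \<subseteq> {..<n}" "finite T" by (auto simp: T_def)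
  assume "\<not> ?thesis"
  then have "card P < card T" by (simp add: T_def)
  then obtain c where c: "\<exists>j\<in>T. c j \<noteq> 0" and c0: "\<forall>p\<in>P. (\<Sum>l\<in>T. c l * Q $$ (p,l)) = 0"
    using underdetermined_system[OF T(2) P, of "\<lambda>l p. Q $$ (p,l)"] by blast
  define x where "x = (\<lambda>i. \<Sum>l\<in>T. c l * Q $$ (i,l))"
  have "quad_form n A x \<ge> 0"
    unfolding x_def quad_form_eigen_comb[OF T(1)] by (rule sum_nonneg) (simp add: T_def)
  then have "\<forall>i<n. x i = 0" using vanish c0 unfolding x_def by blast
  then have "sq_norm n x = 0" by (simp add: sq_norm_def)
  moreover have "sq_norm n x > 0"
    unfolding x_def sq_norm_eigen_comb[OF T(1)] using c sum_squares_pos[OF T(2)] by blast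
  ultimately show False by simp
qed

end

lemma orthogonal_diagonalization_exists:
  assumes "A \<in> carrier_mat n n" and "transpose_mat A = A"
  shows "\<exists>Q f. orthogonal_diagonalization n A Q f"
  using symmetric_orthogonal_diagonalization[OF assms] assms(1)
  by (auto simp: orthogonal_diagonalization_def)

lemma orthogonal_diagonalization_uminus:
  assumes "orthogonal_diagonalization n A Q f"
  shows "orthogonal_diagonalization n (- A) Q (\<lambda>k. - f k)"
proof -
  interpret orthogonal_diagonalization n A Q f by fact
  have "transpose_mat Q * - A * Q = - (transpose_mat Q * A * Q)"
    using A_carrier Q_carrier by (simp add: mult_carrier_mat[of _ n n])
  also have "\<dots> = mat_diag n (\<lambda>k. - f k)"
    unfolding diagonalizes by (rule eq_matI) (auto simp: mat_diag_def)
  finally show ?thesis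
    using A_carrier Q_carrier orthogonal by unfold_locales auto
qed

lemma n_pos_uminus:
  assumes "A \<in> carrier_mat n n" and "transpose_mat A = A"
  shows "n_pos (- A) = n_neg A"
proof -
  obtain Q f where D: "orthogonal_diagonalization n A Q f"
    using orthogonal_diagonalization_exists[OF assms] by blast
  show ?thesis
    using orthogonal_diagonalization.n_pos_eq[OF orthogonal_diagonalization_uminus[OF D]]
      orthogonal_diagonalization.n_neg_eq[OF D] by simp
qed

lemma n_neg_uminus:
  assumes "A \<in> carrier_mat n n" and "transpose_mat A = A"
  shows "n_neg (- A) = n_pos A"
  using n_pos_uminus[of "- A" n] assms by (simp add: transpose_uminus)

lemma quad_form_uminus: "A \<in> carrier_mat n n \<Longrightarrow> quad_form n (- A) x = - quad_form n A x"
  by (simp add: quad_form_def sum_negf)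

lemma inertia_sum:
  assumes "A \<in> carrier_mat n n" and "transpose_mat A = A"
  shows "n_pos A + n_neg A + n_zero A = n"
proof -
  obtain Q f where "orthogonal_diagonalization n A Q f"
    using orthogonal_diagonalization_exists[OF assms] by blast
  then interpret orthogonal_diagonalization n A Q f .
  have "card {k. k < n \<and> f k < 0} + card {k. k < n \<and> f k = 0} = card {k. k < n \<and> \<not> f k > 0}"
    by (subst card_Un_disjoint[symmetric]) (auto intro: arg_cong[where f = card])
  then show ?thesis
    using card_filter_add_card_filter_not[of n "\<lambda>k. f k > 0"]
    unfolding n_pos_eq n_neg_eq n_zero_eq by simp
qed

lemma n_zero_pos_if_singular:
  fixes A :: "real mat"
  assumes A: "A \<in> carrier_mat n n" and v: "v \<in> carrier_vec n" "v \<noteq> 0\<^sub>v n" "A *\<^sub>v v = 0\<^sub>v n"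
  shows "n_zero A \<ge> 1"
proof -
  have "eigenvector A v 0" unfolding eigenvector_def using A v by auto
  then have "eigenvalue A 0" unfolding eigenvalue_def by blast
  then have "poly (char_poly A) 0 = 0" using eigenvalue_root_char_poly[OF A] by simp
  moreover have "char_poly A \<noteq> 0" using degree_monic_char_poly[OF A] by auto
  ultimately show ?thesis using order_root[of "char_poly A" 0] unfolding n_zero_def by simp
qed

lemma n_neg_ge_card_if_neg_definite:
  fixes v :: "'j \<Rightarrow> nat \<Rightarrow> real"
  assumes "A \<in> carrier_mat n n" and "transpose_mat A = A" and J: "finite J"
    and neg: "\<And>c. \<exists>j\<in>J. c j \<noteq> 0 \<Longrightarrow> quad_form n A (\<lambda>i. \<Sum>j\<in>J. c j * v j i) < 0"
  shows "card J \<le> n_neg A"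
proof -
  obtain Q f where "orthogonal_diagonalization n A Q f"
    using orthogonal_diagonalization_exists[OF assms(1,2)] by blast
  then interpret orthogonal_diagonalization n A Q f .
  show ?thesis unfolding n_neg_eq by (rule card_le_card_neg_eigenvalues[OF J neg])
qed

lemma card_add_n_neg_le_if_nonneg:
  fixes v :: "'j \<Rightarrow> nat \<Rightarrow> real"
  assumes "A \<in> carrier_mat n n" and "transpose_mat A = A" and J: "finite J"
    and indep: "\<And>c. \<forall>i<n. (\<Sum>j\<in>J. c j * v j i) = 0 \<Longrightarrow> \<forall>j\<in>J. c j = 0"
    and nonneg: "\<And>c. quad_form n A (\<lambda>i. \<Sum>j\<in>J. c j * v j i) \<ge> 0"
  shows "card J + n_neg A \<le> n"
proof -
  obtain Q f where "orthogonal_diagonalization n A Q f"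
    using orthogonal_diagonalization_exists[OF assms(1,2)] by blast
  then interpret orthogonal_diagonalization n A Q f .
  show ?thesis
    using card_le_card_nonneg_eigenvalues[OF J indep nonneg]
      card_filter_add_card_filter_not[of n "\<lambda>k. f k \<ge> 0"]
    unfolding n_neg_eq by (simp add: not_le)
qed

lemma le_card_add_n_neg_if_vanishing:
  assumes "A \<in> carrier_mat n n" and "transpose_mat A = A" and P: "finite P"
    and vanish: "\<And>x. quad_form n A x \<ge> 0 \<Longrightarrow> \<forall>p\<in>P. x p = 0 \<Longrightarrow> \<forall>i<n. x i = 0"
  shows "n \<le> card P + n_neg A"
proof -
  obtain Q f where "orthogonal_diagonalization n A Q f"
    using orthogonal_diagonalization_exists[OF assms(1,2)] by blast
  then interpret orthogonal_diagonalization n A Q f .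
  show ?thesis
    using card_nonneg_eigenvalues_le[OF P vanish] card_filter_add_card_filter_not[of n "\<lambda>k. f k \<ge> 0"]
    unfolding n_neg_eq by (simp add: not_le)
qed

lemma n_neg_lower_semicontinuous:
  assumes A: "A \<in> carrier_mat n n" and sym: "transpose_mat A = A"
  shows "\<exists>m>0. \<forall>B \<delta>. B \<in> carrier_mat n n \<longrightarrow> transpose_mat B = B \<longrightarrow> \<delta> < m \<longrightarrow>
     (\<forall>x. quad_form n B x \<le> quad_form n A x + \<delta> * sq_norm n x) \<longrightarrow> n_neg A \<le> n_neg B"
proof -
  obtain Q f where "orthogonal_diagonalization n A Q f"
    using orthogonal_diagonalization_exists[OF A sym] by blast
  then interpret orthogonal_diagonalization n A Q f .
  define T where "T = {k. k < n \<and> f k < 0}"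
  have T: "T \<subseteq> {..<n}" "finite T" by (auto simp: T_def)
  \<comment> \<open>\<open>m\<close> bounds the negative eigenvalues away from zero; the extra element \<open>1\<close> covers \<open>T = {}\<close>.\<close>
  define m where "m = Min (insert 1 ((\<lambda>k. - f k) ` T))"
  have m_pos: "m > 0" using T by (auto simp: m_def T_def)
  have m_le: "m \<le> - f k" if "k \<in> T" for k using T that by (auto simp: m_def)
  show ?thesis
  proof (intro exI[of _ m] conjI m_pos allI impI)
    fix B :: "real mat" and \<delta> :: real
    assume B: "B \<in> carrier_mat n n" and sym_B: "transpose_mat B = B" and \<delta>: "\<delta> < m"
      and le: "\<forall>x. quad_form n B x \<le> quad_form n A x + \<delta> * sq_norm n x"
    have "card T \<le> n_neg B"
    proof (rule n_neg_ge_card_if_neg_definite[OF B sym_B T(2), where v = "\<lambda>l i. Q $$ (i,l)"])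
      fix c :: "nat \<Rightarrow> real" assume c: "\<exists>j\<in>T. c j \<noteq> 0"
      let ?x = "\<lambda>i. \<Sum>l\<in>T. c l * Q $$ (i,l)"
      have s: "sq_norm n ?x > 0"
        unfolding sq_norm_eigen_comb[OF T(1)] using c sum_squares_pos[OF T(2)] by blast
      have "quad_form n A ?x \<le> - m * sq_norm n ?x"
      proof (rule quad_form_eigen_comb_le[OF T(1)])
        show "f k \<le> - m" if "k \<in> T" for k using m_le[OF that] by linarith
      qed
      moreover have "quad_form n B ?x \<le> quad_form n A ?x + \<delta> * sq_norm n ?x" using le by blast
      ultimately have "quad_form n B ?x \<le> (\<delta> - m) * sq_norm n ?x"
        unfolding left_diff_distrib by linarith
      also have "\<dots> < 0" using s \<delta> by (simp add: mult_neg_pos)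
      finally show "quad_form n B ?x < 0" .
    qed
    then show "n_neg A \<le> n_neg B" unfolding n_neg_eq T_def .
  qed
qed

section \<open>Signed Laplacians\<close>

definition edge_energy :: "nat \<Rightarrow> (nat \<Rightarrow> nat \<Rightarrow> real) \<Rightarrow> (nat \<Rightarrow> real) \<Rightarrow> real" where
  "edge_energy N \<gamma> x = (\<Sum>i<N. \<Sum>j<N. \<gamma> i j * (x i - x j)\<^sup>2)"

lemma signed_laplacian_dim [simp]:
  "dim_row (signed_laplacian N \<gamma>) = N" "dim_col (signed_laplacian N \<gamma>) = N"
  by (simp_all add: signed_laplacian_def)

lemma signed_laplacian_carrier [simp]: "signed_laplacian N \<gamma> \<in> carrier_mat N N"
  by (simp add: carrier_matI)

lemma signed_laplacian_index:
  "i < N \<Longrightarrow> j < N \<Longrightarrow> signed_laplacian N \<gamma> $$ (i,j) =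
     (if i = j then - (\<Sum>k\<in>{0..<N}-{i}. \<gamma> i k) else \<gamma> i j)"
  by (simp add: signed_laplacian_def)

lemma signed_laplacian_symmetric:
  "\<forall>i j. \<gamma> i j = \<gamma> j i \<Longrightarrow> transpose_mat (signed_laplacian N \<gamma>) = signed_laplacian N \<gamma>"
  by (rule eq_matI) (auto simp: signed_laplacian_def)

lemma signed_laplacian_uminus: "signed_laplacian N (\<lambda>i j. - \<gamma> i j) = - signed_laplacian N \<gamma>"
  by (rule eq_matI) (auto simp: signed_laplacian_def sum_negf)

lemma signed_laplacian_row:
  assumes i: "i < N"
  shows "(\<Sum>j<N. signed_laplacian N \<gamma> $$ (i,j) * x i * x j) = (\<Sum>j<N. \<gamma> i j * (x i * x j - x i * x i))"
proof -
  have fin: "finite {..<N}" and iN: "i \<in> {..<N}" using i by auto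
  have "(\<Sum>j<N. signed_laplacian N \<gamma> $$ (i,j) * x i * x j) =
      signed_laplacian N \<gamma> $$ (i,i) * x i * x i + (\<Sum>j\<in>{..<N}-{i}. \<gamma> i j * x i * x j)"
    using i by (simp add: sum.remove[OF fin iN] signed_laplacian_index)
  also have "signed_laplacian N \<gamma> $$ (i,i) * x i * x i = - (\<Sum>j\<in>{..<N}-{i}. \<gamma> i j * x i * x i)"
    using i by (simp add: signed_laplacian_index sum_distrib_right atLeast0LessThan)
  finally have "(\<Sum>j<N. signed_laplacian N \<gamma> $$ (i,j) * x i * x j)
      = (\<Sum>j\<in>{..<N}-{i}. \<gamma> i j * (x i * x j - x i * x i))"
    by (simp add: sum_subtractf[symmetric] algebra_simps)
  also have "\<dots> = (\<Sum>j<N. \<gamma> i j * (x i * x j - x i * x i))"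
    using sum.remove[OF fin iN, of "\<lambda>j. \<gamma> i j * (x i * x j - x i * x i)"] by simp
  finally show ?thesis .
qed

lemma quad_form_signed_laplacian:
  assumes sym: "\<forall>i j. \<gamma> i j = \<gamma> j i"
  shows "quad_form N (signed_laplacian N \<gamma>) x = - edge_energy N \<gamma> x / 2"
proof -
  have q: "quad_form N (signed_laplacian N \<gamma>) x = (\<Sum>i<N. \<Sum>j<N. \<gamma> i j * (x i * x j - x i * x i))"
    unfolding quad_form_def by (rule sum.cong[OF refl]) (simp add: signed_laplacian_row)
  have "(\<Sum>i<N. \<Sum>j<N. \<gamma> i j * (x j * x j)) = (\<Sum>j<N. \<Sum>i<N. \<gamma> i j * (x j * x j))"
    by (rule sum.swap)
  also have "\<dots> = (\<Sum>i<N. \<Sum>j<N. \<gamma> i j * (x i * x i))" using sym by simp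
  finally have swap: "(\<Sum>i<N. \<Sum>j<N. \<gamma> i j * (x j * x j)) = (\<Sum>i<N. \<Sum>j<N. \<gamma> i j * (x i * x i))" .
  have "edge_energy N \<gamma> x
      = (\<Sum>i<N. \<Sum>j<N. \<gamma> i j * (x i * x i) + \<gamma> i j * (x j * x j) - 2 * (\<gamma> i j * (x i * x j)))"
    unfolding edge_energy_def by (intro sum.cong refl) (simp add: power2_eq_square algebra_simps)
  also have "\<dots> = 2 * (\<Sum>i<N. \<Sum>j<N. \<gamma> i j * (x i * x i)) - 2 * (\<Sum>i<N. \<Sum>j<N. \<gamma> i j * (x i * x j))"
    using swap by (simp add: sum.distrib sum_subtractf sum_distrib_left)
  also have "\<dots> = - 2 * quad_form N (signed_laplacian N \<gamma>) x"
    unfolding q by (simp add: sum_subtractf algebra_simps)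
  finally show ?thesis by simp
qed

lemma n_zero_signed_laplacian:
  assumes N: "N > 0"
  shows "n_zero (signed_laplacian N \<gamma>) \<ge> 1"
proof (rule n_zero_pos_if_singular[OF signed_laplacian_carrier])
  \<comment> \<open>Every row of the signed Laplacian sums to zero.\<close>
  show "vec N (\<lambda>_. 1) \<in> carrier_vec N" by simp
  show "vec N (\<lambda>_. 1::real) \<noteq> 0\<^sub>v N" using N by (metis index_vec index_zero_vec(1) zero_neq_one)
  show "signed_laplacian N \<gamma> *\<^sub>v vec N (\<lambda>_. 1) = 0\<^sub>v N"
  proof (rule eq_vecI)
    fix i assume "i < dim_vec (0\<^sub>v N :: real vec)"
    then have i: "i < N" by simp
    have "(signed_laplacian N \<gamma> *\<^sub>v vec N (\<lambda>_. 1)) $ i = (\<Sum>j<N. signed_laplacian N \<gamma> $$ (i,j) * 1 * 1)"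
      using i by (simp add: scalar_prod_def lessThan_atLeast0)
    also have "\<dots> = 0" using signed_laplacian_row[OF i, of \<gamma> "\<lambda>_. 1"] by simp
    finally show "(signed_laplacian N \<gamma> *\<^sub>v vec N (\<lambda>_. 1)) $ i = 0\<^sub>v N $ i" using i by simp
  qed simp
qed

lemma edge_energy_uminus: "edge_energy N (\<lambda>i j. - \<gamma> i j) x = - edge_energy N \<gamma> x"
  unfolding edge_energy_def by (simp add: sum_negf)

lemma edge_energy_nonneg:
  assumes "\<And>i j. i < N \<Longrightarrow> j < N \<Longrightarrow> \<gamma> i j * (x i - x j)\<^sup>2 \<ge> 0"
  shows "edge_energy N \<gamma> x \<ge> 0"
  unfolding edge_energy_def by (intro sum_nonneg) (auto intro: assms)

lemma edge_energy_eq_0: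
  assumes nonneg: "\<And>i j. i < N \<Longrightarrow> j < N \<Longrightarrow> \<gamma> i j * (x i - x j)\<^sup>2 \<ge> 0"
    and zero: "edge_energy N \<gamma> x = 0" and ij: "i < N" "j < N" and \<gamma>: "\<gamma> i j \<noteq> 0"
  shows "x i = x j"
proof -
  have row: "(\<Sum>j<N. \<gamma> i j * (x i - x j)\<^sup>2) \<ge> 0" if "i < N" for i
    using that by (intro sum_nonneg) (auto intro: nonneg)
  have "(\<Sum>j<N. \<gamma> i j * (x i - x j)\<^sup>2) = 0"
    using zero ij row unfolding edge_energy_def by (subst (asm) sum_nonneg_eq_0_iff) auto
  then have "\<gamma> i j * (x i - x j)\<^sup>2 = 0"
    using ij nonneg by (subst (asm) sum_nonneg_eq_0_iff) auto
  then show ?thesis using \<gamma> by simp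
qed

lemma sum_sq_diff_le: "(\<Sum>i<N. \<Sum>j<N. (x i - x j)\<^sup>2) \<le> 4 * real N * sq_norm N x"
proof -
  have "(\<Sum>i<N. \<Sum>j<N. (x i - x j)\<^sup>2) \<le> (\<Sum>i<N. \<Sum>j<N. 2 * (x i)\<^sup>2 + 2 * (x j)\<^sup>2)"
  proof (intro sum_mono)
    fix i j
    have "0 \<le> (x i + x j)\<^sup>2" by simp
    then show "(x i - x j)\<^sup>2 \<le> 2 * (x i)\<^sup>2 + 2 * (x j)\<^sup>2" by (simp add: power2_eq_square algebra_simps)
  qed
  also have "\<dots> = 4 * real N * sq_norm N x"
    by (simp add: sum.distrib sq_norm_def sum_distrib_left[symmetric] sum.swap[of "\<lambda>i j. (x j)\<^sup>2"])
  finally show ?thesis .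
qed

lemma edge_energy_diff_le:
  assumes e: "\<And>i j. \<bar>\<gamma>' i j - \<gamma> i j\<bar> \<le> \<epsilon>"
  shows "\<bar>edge_energy N \<gamma>' x - edge_energy N \<gamma> x\<bar> \<le> \<epsilon> * (4 * real N * sq_norm N x)"
proof -
  have "\<bar>edge_energy N \<gamma>' x - edge_energy N \<gamma> x\<bar> = \<bar>\<Sum>i<N. \<Sum>j<N. (\<gamma>' i j - \<gamma> i j) * (x i - x j)\<^sup>2\<bar>"
    unfolding edge_energy_def by (simp add: sum_subtractf[symmetric] left_diff_distrib)
  also have "\<dots> \<le> (\<Sum>i<N. \<Sum>j<N. \<bar>(\<gamma>' i j - \<gamma> i j) * (x i - x j)\<^sup>2\<bar>)"
    by (rule order_trans[OF sum_abs]) (intro sum_mono sum_abs)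
  also have "\<dots> \<le> (\<Sum>i<N. \<Sum>j<N. \<epsilon> * (x i - x j)\<^sup>2)"
    by (intro sum_mono) (use e in \<open>auto simp: abs_mult intro: mult_right_mono\<close>)
  also have "\<dots> = \<epsilon> * (\<Sum>i<N. \<Sum>j<N. (x i - x j)\<^sup>2)" by (simp add: sum_distrib_left)
  also have "\<dots> \<le> \<epsilon> * (4 * real N * sq_norm N x)"
    using e[of 0 0] sum_sq_diff_le[where N = N and x = x] by (simp add: mult_left_mono)
  finally show ?thesis .
qed

lemma n_neg_signed_laplacian_lower_semicontinuous:
  assumes sym: "\<forall>i j. \<gamma> i j = \<gamma> j i"
  shows "\<exists>\<epsilon>>0. \<forall>\<gamma>'. (\<forall>i j. \<gamma>' i j = \<gamma>' j i) \<longrightarrow> (\<forall>i j. \<bar>\<gamma>' i j - \<gamma> i j\<bar> \<le> \<epsilon>) \<longrightarrow>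
     n_neg (signed_laplacian N \<gamma>) \<le> n_neg (signed_laplacian N \<gamma>')"
proof -
  obtain m where m: "m > 0" and lsc: "\<forall>B \<delta>. B \<in> carrier_mat N N \<longrightarrow> transpose_mat B = B \<longrightarrow> \<delta> < m \<longrightarrow>
      (\<forall>x. quad_form N B x \<le> quad_form N (signed_laplacian N \<gamma>) x + \<delta> * sq_norm N x) \<longrightarrow>
      n_neg (signed_laplacian N \<gamma>) \<le> n_neg B"
    using n_neg_lower_semicontinuous[OF signed_laplacian_carrier signed_laplacian_symmetric[OF sym]]
    by blast
  define \<epsilon> where "\<epsilon> = m / (4 * real N + 1)"
  have \<epsilon>: "\<epsilon> > 0" using m by (simp add: \<epsilon>_def add_pos_nonneg)
  have "2 * real N * \<epsilon> = m * (2 * real N / (4 * real N + 1))" by (simp add: \<epsilon>_def)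
  also have "\<dots> < m * 1" using m by (intro mult_strict_left_mono) auto
  finally have \<delta>: "2 * real N * \<epsilon> < m" by simp
  show ?thesis
  proof (intro exI[of _ \<epsilon>] conjI \<epsilon> allI impI)
    fix \<gamma>' assume sym': "\<forall>i j. \<gamma>' i j = \<gamma>' j i" and close: "\<forall>i j. \<bar>\<gamma>' i j - \<gamma> i j\<bar> \<le> \<epsilon>"
    have "quad_form N (signed_laplacian N \<gamma>') x
        \<le> quad_form N (signed_laplacian N \<gamma>) x + 2 * real N * \<epsilon> * sq_norm N x" for x
    proof -
      have "\<bar>edge_energy N \<gamma>' x - edge_energy N \<gamma> x\<bar> \<le> \<epsilon> * (4 * real N * sq_norm N x)"
        using close by (intro edge_energy_diff_le) blast
      also have "\<dots> = 2 * (2 * real N * \<epsilon> * sq_norm N x)" by simp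
      finally show ?thesis
        unfolding quad_form_signed_laplacian[OF sym] quad_form_signed_laplacian[OF sym'] abs_le_iff
        by linarith
    qed
    then show "n_neg (signed_laplacian N \<gamma>) \<le> n_neg (signed_laplacian N \<gamma>')"
      using lsc \<delta> signed_laplacian_symmetric[OF sym'] by simp
  qed
qed

lemma inertia_signed_laplacian_uminus:
  fixes N :: nat
  assumes sym: "\<forall>i j. \<gamma> i j = \<gamma> j i"
  defines "L \<equiv> signed_laplacian N \<gamma>" and "L' \<equiv> signed_laplacian N (\<lambda>i j. - \<gamma> i j)"
  shows "n_pos L' = n_neg L" and "n_neg L' = n_pos L" and "n_zero L' = n_zero L"
proof -
  have L: "L \<in> carrier_mat N N" "transpose_mat L = L"
    unfolding L_def by (simp_all add: signed_laplacian_symmetric[OF sym])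
  have L': "L' = - L" unfolding L_def L'_def by (rule signed_laplacian_uminus)
  show pos: "n_pos L' = n_neg L" and neg: "n_neg L' = n_pos L"
    unfolding L' using n_pos_uminus[OF L] n_neg_uminus[OF L] by simp_all
  have "transpose_mat L' = L'" using L by (simp add: L' transpose_uminus)
  then show "n_zero L' = n_zero L"
    using inertia_sum[OF L] inertia_sum[of L' N] pos neg L' L(1) by simp
qed

section \<open>Connected components\<close>

definition component :: "(nat \<Rightarrow> nat \<Rightarrow> bool) \<Rightarrow> nat \<Rightarrow> nat set" where
  "component R i = {j. R\<^sup>*\<^sup>* i j}"

lemma rtranclp_edge_invariant:
  assumes "\<And>i j. R i j \<Longrightarrow> x i = x j" and "R\<^sup>*\<^sup>* i j"
  shows "x i = x j"
  using assms(2) by (induct rule: rtranclp_induct) (use assms(1) in auto)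

locale symmetric_edges =
  fixes N :: nat and R :: "nat \<Rightarrow> nat \<Rightarrow> bool"
  assumes edge: "R i j \<Longrightarrow> i < N \<and> j < N \<and> R j i"
begin

abbreviation components :: "nat set set" where
  "components \<equiv> component R ` {0..<N}"

lemma num_components_eq: "num_components N R = card components"
proof -
  have "{0..<N} // {(i,j). R\<^sup>*\<^sup>* i j} = components"
    unfolding quotient_def component_def by auto
  then show ?thesis by (simp add: num_components_def)
qed

lemma rtranclp_sym: "R\<^sup>*\<^sup>* i j \<Longrightarrow> R\<^sup>*\<^sup>* j i"
proof (induct rule: rtranclp_induct)
  case (step y z)
  then show ?case using edge by (meson converse_rtranclp_into_rtranclp)
qed simp

lemma component_eq: "j \<in> component R i \<Longrightarrow> component R j = component R i"
  unfolding component_def using rtranclp_sym by (auto intro: rtranclp_trans)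

lemma mem_component_iff: "C \<in> components \<Longrightarrow> i \<in> C \<longleftrightarrow> C = component R i"
  using component_eq by (auto simp: component_def)

lemma indicator_comb_eval:
  fixes c :: "nat set \<Rightarrow> real"
  assumes J: "J \<subseteq> components"
  shows "(\<Sum>C\<in>J. c C * of_bool (i \<in> C)) = (if component R i \<in> J then c (component R i) else 0)"
proof -
  have "finite J" using J finite_subset by blast
  moreover have "(\<Sum>C\<in>J. c C * of_bool (i \<in> C)) = (\<Sum>C\<in>J. if component R i = C then c C else 0)"
  proof (rule sum.cong[OF refl])
    fix C assume "C \<in> J"
    then have "i \<in> C \<longleftrightarrow> component R i = C" using J mem_component_iff by blast
    then show "c C * of_bool (i \<in> C) = (if component R i = C then c C else 0)" by simp
  qed
  ultimately show ?thesis by simp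
qed

lemma indicator_comb_edge:
  fixes c :: "nat set \<Rightarrow> real"
  assumes J: "J \<subseteq> components" and "R i j"
  shows "(\<Sum>C\<in>J. c C * of_bool (i \<in> C)) = (\<Sum>C\<in>J. c C * of_bool (j \<in> C))"
proof -
  have "component R j = component R i"
    by (rule component_eq) (use \<open>R i j\<close> in \<open>simp add: component_def\<close>)
  then show ?thesis by (simp only: indicator_comb_eval[OF J])
qed

lemma indicator_comb_eq_0:
  fixes c :: "nat set \<Rightarrow> real"
  assumes J: "J \<subseteq> components" and zero: "\<forall>i<N. (\<Sum>C\<in>J. c C * of_bool (i \<in> C)) = (0::real)"
  shows "\<forall>C\<in>J. c C = 0"
proof
  fix C assume "C \<in> J"
  moreover obtain i where "i < N" "C = component R i" using J \<open>C \<in> J\<close> by auto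
  ultimately show "c C = 0" using zero indicator_comb_eval[OF J, where c = c and i = i] by simp
qed

lemma le_num_components_add_n_neg:
  "N \<le> num_components N R + n_neg (signed_laplacian N (\<lambda>i j. of_bool (R i j)))"
proof -
  let ?\<gamma> = "\<lambda>i j. of_bool (R i j) :: real"
  have sym: "\<forall>i j. ?\<gamma> i j = ?\<gamma> j i" using edge by auto
  \<comment> \<open>The form is \<open>- 1/2 \<Sum> (x\<^sub>i - x\<^sub>j)\<^sup>2\<close> over the edges, so it is nonnegative only on vectors
    constant on components, and these vanish once they vanish at one vertex of each component.\<close>
  define rep where "rep C = (SOME i. i \<in> C)" for C :: "nat set"
  have "N \<le> card (rep ` components) + n_neg (signed_laplacian N ?\<gamma>)"
  proof (rule le_card_add_n_neg_if_vanishing[OF signed_laplacian_carrier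
        signed_laplacian_symmetric[OF sym]])
    show "finite (rep ` components)" by simp
    fix x assume nonneg: "quad_form N (signed_laplacian N ?\<gamma>) x \<ge> 0"
      and vanish: "\<forall>p\<in>rep ` components. x p = 0"
    have terms: "\<And>i j. i < N \<Longrightarrow> j < N \<Longrightarrow> 0 \<le> ?\<gamma> i j * (x i - x j)\<^sup>2" by simp
    have "edge_energy N ?\<gamma> x \<ge> 0" by (rule edge_energy_nonneg) simp
    then have zero: "edge_energy N ?\<gamma> x = 0"
      using nonneg unfolding quad_form_signed_laplacian[OF sym] by linarith
    have const: "x i = x j" if "R i j" for i j
    proof (rule edge_energy_eq_0[where \<gamma> = ?\<gamma> and x = x, OF terms zero])
      show "i < N" "j < N" using edge that by auto
      show "?\<gamma> i j \<noteq> 0" using that by simp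
    qed
    show "\<forall>i<N. x i = 0"
    proof (intro allI impI)
      fix i assume i: "i < N"
      have "rep (component R i) \<in> component R i"
        unfolding rep_def by (rule someI[of _ i]) (simp add: component_def)
      then have "x i = x (rep (component R i))"
        using rtranclp_edge_invariant[OF const] by (simp add: component_def)
      also have "\<dots> = 0" using vanish i by auto
      finally show "x i = 0" .
    qed
  qed
  moreover have "card (rep ` components) \<le> card components" by (rule card_image_le) simp
  ultimately show ?thesis unfolding num_components_eq by linarith
qed

end

section \<open>Signed graphs\<close>

lemma
  assumes "\<gamma> \<in> admissible_weights E \<sigma>"
  shows admissible_weights_sym: "\<forall>i j. \<gamma> i j = \<gamma> j i"
    and admissible_weights_neg: "E i j \<Longrightarrow> \<not> \<sigma> i j \<Longrightarrow> \<gamma> i j < 0"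
    and admissible_weights_zero: "\<not> E i j \<Longrightarrow> \<gamma> i j = 0"
  using assms unfolding admissible_weights_def by blast+

lemma admissible_weights_uminus:
  "\<gamma> \<in> admissible_weights E \<sigma> \<Longrightarrow> (\<lambda>i j. - \<gamma> i j) \<in> admissible_weights E (\<lambda>i j. \<not> \<sigma> i j)"
  by (auto simp: admissible_weights_def)

lemma weights_open_uminus:
  assumes U: "weights_open E (\<lambda>i j. \<not> \<sigma> i j) U"
  shows "weights_open E \<sigma> ((\<lambda>\<gamma> i j. - \<gamma> i j) ` U)"
  unfolding weights_open_def
proof (intro conjI ballI)
  show "(\<lambda>\<gamma> i j. - \<gamma> i j) ` U \<subseteq> admissible_weights E \<sigma>"
    using U admissible_weights_uminus[of _ E "\<lambda>i j. \<not> \<sigma> i j"] by (auto simp: weights_open_def)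
  fix \<gamma> assume "\<gamma> \<in> (\<lambda>\<gamma> i j. - \<gamma> i j) ` U"
  then obtain \<eta> where \<eta>: "\<eta> \<in> U" and \<gamma>: "\<gamma> = (\<lambda>i j. - \<eta> i j)" by blast
  obtain \<epsilon> where "\<epsilon> > 0" and \<epsilon>: "\<forall>\<eta>'\<in>admissible_weights E (\<lambda>i j. \<not> \<sigma> i j).
      (\<forall>i j. E i j \<longrightarrow> \<bar>\<eta>' i j - \<eta> i j\<bar> < \<epsilon>) \<longrightarrow> \<eta>' \<in> U"
    using U \<eta> unfolding weights_open_def by blast
  show "\<exists>\<epsilon>>0. \<forall>\<gamma>'\<in>admissible_weights E \<sigma>.
      (\<forall>i j. E i j \<longrightarrow> \<bar>\<gamma>' i j - \<gamma> i j\<bar> < \<epsilon>) \<longrightarrow> \<gamma>' \<in> (\<lambda>\<gamma> i j. - \<gamma> i j) ` U"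
  proof (intro exI[of _ \<epsilon>] conjI \<open>\<epsilon> > 0\<close> ballI impI)
    fix \<gamma>' assume adm: "\<gamma>' \<in> admissible_weights E \<sigma>"
      and close: "\<forall>i j. E i j \<longrightarrow> \<bar>\<gamma>' i j - \<gamma> i j\<bar> < \<epsilon>"
    have "\<bar>- \<gamma>' i j - \<eta> i j\<bar> < \<epsilon>" if "E i j" for i j
      using close[rule_format, OF that] unfolding \<gamma> abs_less_iff by linarith
    then have "(\<lambda>i j. - \<gamma>' i j) \<in> U"
      using \<epsilon>[rule_format, of "\<lambda>i j. - \<gamma>' i j", OF admissible_weights_uminus[OF adm]] by blast
    then show "\<gamma>' \<in> (\<lambda>\<gamma> i j. - \<gamma> i j) ` U" by (rule rev_image_eqI) simp
  qed
qed

locale signed_graph =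
  fixes N :: nat and E \<sigma> :: "nat \<Rightarrow> nat \<Rightarrow> bool"
  assumes simple: "simple_graph N E"
    and sign_sym: "\<forall>i j. E i j \<longrightarrow> \<sigma> i j = \<sigma> j i"
    and connected: "graph_connected N E"
begin

abbreviation "Ep \<equiv> \<lambda>i j. E i j \<and> \<sigma> i j"
abbreviation "Em \<equiv> \<lambda>i j. E i j \<and> \<not> \<sigma> i j"

lemma edge: "E i j \<Longrightarrow> i < N \<and> j < N \<and> E j i"
  using simple unfolding simple_graph_def by blast

lemma N_pos: "N > 0"
  using connected unfolding graph_connected_def by blast

sublocale pos: symmetric_edges N Ep
  by unfold_locales (use edge sign_sym in blast)

lemma dual: "signed_graph N E (\<lambda>i j. \<not> \<sigma> i j)"
  by unfold_locales (use simple sign_sym connected in auto)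

lemma edge_invariant_const:
  assumes "\<And>i j. E i j \<Longrightarrow> x i = x j" and "i < N"
  shows "x i = x 0"
  using rtranclp_edge_invariant[of E x 0 i] assms connected N_pos
  unfolding graph_connected_def by simp

context
  fixes \<gamma> assumes adm: "\<gamma> \<in> admissible_weights E \<sigma>"
begin

lemma edge_energy_nonpos_if_const_on_pos:
  assumes const: "\<And>i j. Ep i j \<Longrightarrow> x i = x j"
  shows "edge_energy N \<gamma> x \<le> 0" and "edge_energy N \<gamma> x = 0 \<Longrightarrow> Em i j \<Longrightarrow> x i = x j"
proof -
  have terms: "0 \<le> - \<gamma> i j * (x i - x j)\<^sup>2" for i j
    using const[of i j] admissible_weights_neg[OF adm, of i j] admissible_weights_zero[OF adm, of i j]
    by (cases "E i j"; cases "\<sigma> i j") (auto intro: mult_nonpos_nonneg)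
  show "edge_energy N \<gamma> x \<le> 0"
    using edge_energy_nonneg[of N "\<lambda>i j. - \<gamma> i j", OF terms] by (simp add: edge_energy_uminus)
  assume zero: "edge_energy N \<gamma> x = 0" and e: "Em i j"
  have "edge_energy N (\<lambda>i j. - \<gamma> i j) x = 0" using zero by (simp add: edge_energy_uminus)
  moreover have "i < N" "j < N" using e edge by auto
  moreover have "- \<gamma> i j \<noteq> 0" using e admissible_weights_neg[OF adm, of i j] by simp
  ultimately show "x i = x j" by (rule edge_energy_eq_0[rotated]) (rule terms)
qed

lemma num_components_pos_le: "num_components N Ep \<le> n_pos (signed_laplacian N \<gamma>) + 1"
proof -
  let ?L = "signed_laplacian N \<gamma>"
  have sym: "\<forall>i j. \<gamma> i j = \<gamma> j i" by (rule admissible_weights_sym[OF adm])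
  let ?J = "pos.components - {component Ep 0}"
  have J: "?J \<subseteq> pos.components" by blast
  \<comment> \<open>On vectors constant on the components of \<open>\<Gamma>\<^sub>+\<close> and vanishing on that of vertex \<open>0\<close>, the form
    of \<open>- L\<close> is negative definite, since by connectedness the vector would otherwise be constant.\<close>
  have "card ?J \<le> n_neg (- ?L)"
  proof (rule n_neg_ge_card_if_neg_definite[where v = "\<lambda>C i. of_bool (i \<in> C)"])
    show "- ?L \<in> carrier_mat N N" "transpose_mat (- ?L) = - ?L"
      by (simp_all add: transpose_uminus signed_laplacian_symmetric[OF sym])
    show "finite ?J" by simp
    fix c :: "nat set \<Rightarrow> real" assume c: "\<exists>C\<in>?J. c C \<noteq> 0"
    define x where "x = (\<lambda>i. \<Sum>C\<in>?J. c C * of_bool (i \<in> C))"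
    have const: "x i = x j" if "Ep i j" for i j
      unfolding x_def using pos.indicator_comb_edge[OF J that] .
    have "edge_energy N \<gamma> x < 0"
    proof (rule ccontr)
      assume "\<not> edge_energy N \<gamma> x < 0"
      then have "edge_energy N \<gamma> x = 0"
        using edge_energy_nonpos_if_const_on_pos(1)[where x = x, OF const] by simp
      then have "x i = x j" if "E i j" for i j
        using edge_energy_nonpos_if_const_on_pos(2)[where x = x, OF const] const that by blast
      moreover have "x 0 = 0" unfolding x_def by (simp add: pos.indicator_comb_eval[OF J])
      ultimately have "\<forall>i<N. x i = 0" using edge_invariant_const by metis
      then show False using pos.indicator_comb_eq_0[OF J] c unfolding x_def by blast
    qed
    then show "quad_form N (- ?L) x < 0"
      by (simp add: quad_form_uminus quad_form_signed_laplacian[OF sym])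
  qed
  moreover have "card ?J = card pos.components - 1" using N_pos by (simp add: card_Diff_singleton)
  moreover have "n_neg (- ?L) = n_pos ?L"
    by (rule n_neg_uminus[OF signed_laplacian_carrier signed_laplacian_symmetric[OF sym]])
  ultimately show ?thesis unfolding pos.num_components_eq by linarith
qed

lemma num_components_pos_add_n_neg_le: "num_components N Ep + n_neg (signed_laplacian N \<gamma>) \<le> N"
proof -
  have sym: "\<forall>i j. \<gamma> i j = \<gamma> j i" by (rule admissible_weights_sym[OF adm])
  \<comment> \<open>On vectors constant on the components of \<open>\<Gamma>\<^sub>+\<close> only negative edges contribute to the form.\<close>
  have "card pos.components + n_neg (signed_laplacian N \<gamma>) \<le> N"
  proof (rule card_add_n_neg_le_if_nonneg[OF signed_laplacian_carrier signed_laplacian_symmetric[OF sym],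
        where v = "\<lambda>C i. of_bool (i \<in> C)"])
    show "finite pos.components" by simp
    fix c :: "nat set \<Rightarrow> real"
    show "\<forall>i<N. (\<Sum>C\<in>pos.components. c C * of_bool (i \<in> C)) = 0 \<Longrightarrow> \<forall>C\<in>pos.components. c C = 0"
      by (rule pos.indicator_comb_eq_0) simp
    have "edge_energy N \<gamma> (\<lambda>i. \<Sum>C\<in>pos.components. c C * of_bool (i \<in> C)) \<le> 0"
      by (rule edge_energy_nonpos_if_const_on_pos(1), rule pos.indicator_comb_edge[OF order_refl])
    then show "quad_form N (signed_laplacian N \<gamma>) (\<lambda>i. \<Sum>C\<in>pos.components. c C * of_bool (i \<in> C)) \<ge> 0"
      by (simp add: quad_form_signed_laplacian[OF sym])
  qed
  then show ?thesis unfolding pos.num_components_eq .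
qed

end

lemma inertia_bounds:
  assumes adm: "\<gamma> \<in> admissible_weights E \<sigma>"
  defines "L \<equiv> signed_laplacian N \<gamma>"
  shows "num_components N Ep \<le> n_pos L + 1" and "num_components N Em + n_pos L \<le> N"
    and "num_components N Em \<le> n_neg L + 1" and "num_components N Ep + n_neg L \<le> N"
    and "1 \<le> n_zero L" and "n_pos L + n_neg L + n_zero L = N"
proof -
  interpret dual: signed_graph N E "\<lambda>i j. \<not> \<sigma> i j" by (rule dual)
  note adm' = admissible_weights_uminus[OF adm]
  note swap = inertia_signed_laplacian_uminus[OF admissible_weights_sym[OF adm], of N, folded L_def]
  show "num_components N Ep \<le> n_pos L + 1" unfolding L_def by (rule num_components_pos_le[OF adm])
  show "num_components N Ep + n_neg L \<le> N"
    unfolding L_def by (rule num_components_pos_add_n_neg_le[OF adm])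
  show "num_components N Em \<le> n_neg L + 1"
    using dual.num_components_pos_le[OF adm'] swap by simp
  show "num_components N Em + n_pos L \<le> N"
    using dual.num_components_pos_add_n_neg_le[OF adm'] swap by simp
  show "1 \<le> n_zero L" unfolding L_def by (rule n_zero_signed_laplacian[OF N_pos])
  show "n_pos L + n_neg L + n_zero L = N"
    unfolding L_def
    by (rule inertia_sum) (simp_all add: signed_laplacian_symmetric admissible_weights_sym[OF adm])
qed

lemma inertia_bounds_int:
  "\<forall>\<gamma>\<in>admissible_weights E \<sigma>.
    int (num_components N Ep) - 1 \<le> int (n_pos (signed_laplacian N \<gamma>)) \<and>
    int (n_pos (signed_laplacian N \<gamma>)) \<le> int N - int (num_components N Em) \<and>
    int (num_components N Em) - 1 \<le> int (n_neg (signed_laplacian N \<gamma>)) \<and>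
    int (n_neg (signed_laplacian N \<gamma>)) \<le> int N - int (num_components N Ep) \<and>
    1 \<le> int (n_zero (signed_laplacian N \<gamma>)) \<and>
    int (n_zero (signed_laplacian N \<gamma>)) \<le>
      int N + 2 - int (num_components N Em) - int (num_components N Ep)"
  (is "\<forall>\<gamma>\<in>_. ?bounds \<gamma>")
proof
  fix \<gamma> assume "\<gamma> \<in> admissible_weights E \<sigma>"
  from inertia_bounds[OF this] show "?bounds \<gamma>" by (intro conjI; linarith)
qed

definition max_neg_weights :: "(nat \<Rightarrow> nat \<Rightarrow> real) set" where
  "max_neg_weights =
    {\<gamma> \<in> admissible_weights E \<sigma>. N - num_components N Ep \<le> n_neg (signed_laplacian N \<gamma>)}"

lemma max_neg_weights_inertia:
  assumes "\<gamma> \<in> max_neg_weights"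
  defines "L \<equiv> signed_laplacian N \<gamma>"
  shows "int (n_pos L) = int (num_components N Ep) - 1 \<and> n_neg L = N - num_components N Ep \<and>
    n_zero L = 1"
proof -
  have adm: "\<gamma> \<in> admissible_weights E \<sigma>" and bound: "N - num_components N Ep \<le> n_neg L"
    using assms(1) unfolding max_neg_weights_def L_def by auto
  note b = inertia_bounds[OF adm, folded L_def]
  have c_le: "num_components N Ep \<le> N" using b(4) by linarith
  then have "n_neg L \<le> N - num_components N Ep" using b(4) by (simp add: le_diff_conv2)
  then have neg: "n_neg L = N - num_components N Ep" using bound by (rule antisym)
  then have "int (n_neg L) = int N - int (num_components N Ep)" using c_le by simp
  then show ?thesis using neg b(1,5,6) by linarith
qed

lemma max_neg_weights_open: "weights_open E \<sigma> max_neg_weights"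
  unfolding weights_open_def
proof (intro conjI ballI)
  show "max_neg_weights \<subseteq> admissible_weights E \<sigma>" unfolding max_neg_weights_def by blast
  fix \<gamma> assume "\<gamma> \<in> max_neg_weights"
  then have adm: "\<gamma> \<in> admissible_weights E \<sigma>"
    and bound: "N - num_components N Ep \<le> n_neg (signed_laplacian N \<gamma>)"
    unfolding max_neg_weights_def by auto
  obtain \<epsilon> where "\<epsilon> > 0" and lsc: "\<forall>\<gamma>'. (\<forall>i j. \<gamma>' i j = \<gamma>' j i) \<longrightarrow> (\<forall>i j. \<bar>\<gamma>' i j - \<gamma> i j\<bar> \<le> \<epsilon>) \<longrightarrow>
      n_neg (signed_laplacian N \<gamma>) \<le> n_neg (signed_laplacian N \<gamma>')"
    using n_neg_signed_laplacian_lower_semicontinuous[OF admissible_weights_sym[OF adm]] by blast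
  show "\<exists>\<epsilon>>0. \<forall>\<gamma>'\<in>admissible_weights E \<sigma>.
      (\<forall>i j. E i j \<longrightarrow> \<bar>\<gamma>' i j - \<gamma> i j\<bar> < \<epsilon>) \<longrightarrow> \<gamma>' \<in> max_neg_weights"
  proof (intro exI[of _ \<epsilon>] conjI \<open>\<epsilon> > 0\<close> ballI impI)
    fix \<gamma>' assume adm': "\<gamma>' \<in> admissible_weights E \<sigma>"
      and close: "\<forall>i j. E i j \<longrightarrow> \<bar>\<gamma>' i j - \<gamma> i j\<bar> < \<epsilon>"
    have close': "\<bar>\<gamma>' i j - \<gamma> i j\<bar> \<le> \<epsilon>" for i j
      using close \<open>\<epsilon> > 0\<close> admissible_weights_zero[OF adm] admissible_weights_zero[OF adm']
      by (cases "E i j") (auto simp: less_imp_le)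
    have "n_neg (signed_laplacian N \<gamma>) \<le> n_neg (signed_laplacian N \<gamma>')"
      by (rule lsc[rule_format]) (use admissible_weights_sym[OF adm'] close' in auto)
    then show "\<gamma>' \<in> max_neg_weights" using adm' bound unfolding max_neg_weights_def by simp
  qed
qed

lemma max_neg_weights_nonempty: "max_neg_weights \<noteq> {}"
proof -
  \<comment> \<open>Perturb the unweighted Laplacian of \<open>\<Gamma>\<^sub>+\<close> by small negative weights on \<open>\<Gamma>\<^sub>-\<close>.\<close>
  let ?\<gamma>\<^sub>0 = "\<lambda>i j. of_bool (Ep i j) :: real"
  have Ep_sym: "Ep i j \<longleftrightarrow> Ep j i" and Em_sym: "Em i j \<longleftrightarrow> Em j i" for i j
    using edge sign_sym by blast+
  have sym\<^sub>0: "\<forall>i j. ?\<gamma>\<^sub>0 i j = ?\<gamma>\<^sub>0 j i"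
    by (intro allI) (simp only: Ep_sym)
  obtain \<epsilon> where "\<epsilon> > 0" and lsc: "\<forall>\<gamma>'. (\<forall>i j. \<gamma>' i j = \<gamma>' j i) \<longrightarrow> (\<forall>i j. \<bar>\<gamma>' i j - ?\<gamma>\<^sub>0 i j\<bar> \<le> \<epsilon>) \<longrightarrow>
      n_neg (signed_laplacian N ?\<gamma>\<^sub>0) \<le> n_neg (signed_laplacian N \<gamma>')"
    using n_neg_signed_laplacian_lower_semicontinuous[OF sym\<^sub>0] by blast
  define \<gamma> where "\<gamma> = (\<lambda>i j. of_bool (Ep i j) - \<epsilon> * of_bool (Em i j))"
  have sym: "\<forall>i j. \<gamma> i j = \<gamma> j i"
    unfolding \<gamma>_def by (intro allI) (simp only: Ep_sym Em_sym)
  then have adm: "\<gamma> \<in> admissible_weights E \<sigma>"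
    using \<open>\<epsilon> > 0\<close> by (auto simp: admissible_weights_def \<gamma>_def)
  have "n_neg (signed_laplacian N ?\<gamma>\<^sub>0) \<le> n_neg (signed_laplacian N \<gamma>)"
    using lsc sym \<open>\<epsilon> > 0\<close> by (simp add: \<gamma>_def)
  moreover have "N \<le> num_components N Ep + n_neg (signed_laplacian N ?\<gamma>\<^sub>0)"
    by (rule pos.le_num_components_add_n_neg)
  ultimately have "\<gamma> \<in> max_neg_weights" using adm unfolding max_neg_weights_def by simp
  then show ?thesis by blast
qed

lemma extremal_neg_weights:
  "\<exists>U. U \<noteq> {} \<and> weights_open E \<sigma> U \<and>
     (\<forall>\<gamma>\<in>U. int (n_pos (signed_laplacian N \<gamma>)) = int (num_components N Ep) - 1 \<and>
            n_neg (signed_laplacian N \<gamma>) = N - num_components N Ep \<and>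
            n_zero (signed_laplacian N \<gamma>) = 1)"
  by (intro exI[of _ max_neg_weights] conjI max_neg_weights_nonempty max_neg_weights_open ballI
      max_neg_weights_inertia)

lemma extremal_pos_weights:
  "\<exists>U. U \<noteq> {} \<and> weights_open E \<sigma> U \<and>
     (\<forall>\<gamma>\<in>U. n_pos (signed_laplacian N \<gamma>) = N - num_components N Em \<and>
            int (n_neg (signed_laplacian N \<gamma>)) = int (num_components N Em) - 1 \<and>
            n_zero (signed_laplacian N \<gamma>) = 1)"
proof -
  interpret dual: signed_graph N E "\<lambda>i j. \<not> \<sigma> i j" by (rule dual)
  have "\<forall>\<gamma>\<in>dual.max_neg_weights.
      n_pos (signed_laplacian N (\<lambda>i j. - \<gamma> i j)) = N - num_components N Em \<and>
      int (n_neg (signed_laplacian N (\<lambda>i j. - \<gamma> i j))) = int (num_components N Em) - 1 \<and>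
      n_zero (signed_laplacian N (\<lambda>i j. - \<gamma> i j)) = 1"
  proof
    fix \<gamma> assume \<gamma>: "\<gamma> \<in> dual.max_neg_weights"
    then have "\<forall>i j. \<gamma> i j = \<gamma> j i"
      by (auto simp: dual.max_neg_weights_def dest: admissible_weights_sym)
    then show "n_pos (signed_laplacian N (\<lambda>i j. - \<gamma> i j)) = N - num_components N Em \<and>
        int (n_neg (signed_laplacian N (\<lambda>i j. - \<gamma> i j))) = int (num_components N Em) - 1 \<and>
        n_zero (signed_laplacian N (\<lambda>i j. - \<gamma> i j)) = 1"
      using dual.max_neg_weights_inertia[OF \<gamma>] inertia_signed_laplacian_uminus by simp
  qed
  then show ?thesis
    using dual.max_neg_weights_nonempty weights_open_uminus[OF dual.max_neg_weights_open]
    by (intro exI[of _ "(\<lambda>\<gamma> i j. - \<gamma> i j) ` dual.max_neg_weights"]) auto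
qed

end

theorem mainTheorem1:
  fixes N :: nat and E \<sigma> :: "nat \<Rightarrow> nat \<Rightarrow> bool"
  assumes graph: "simple_graph N E"
    and sym_sign: "\<forall>i j. E i j \<longrightarrow> \<sigma> i j = \<sigma> j i"
    and conn: "graph_connected N E"
  defines "Ep \<equiv> (\<lambda>i j. E i j \<and> \<sigma> i j)"
    and "Em \<equiv> (\<lambda>i j. E i j \<and> \<not> \<sigma> i j)"
  shows
   "(\<forall>\<gamma>\<in>admissible_weights E \<sigma>.
      int (num_components N Ep) - 1 \<le> int (n_pos (signed_laplacian N \<gamma>)) \<and>
      int (n_pos (signed_laplacian N \<gamma>)) \<le> int N - int (num_components N Em) \<and>
      int (num_components N Em) - 1 \<le> int (n_neg (signed_laplacian N \<gamma>)) \<and>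
      int (n_neg (signed_laplacian N \<gamma>)) \<le> int N - int (num_components N Ep) \<and>
      1 \<le> int (n_zero (signed_laplacian N \<gamma>)) \<and>
      int (n_zero (signed_laplacian N \<gamma>)) \<le>
        int N + 2 - int (num_components N Em) - int (num_components N Ep))
    \<and> (\<exists>U. U \<noteq> {} \<and> weights_open E \<sigma> U \<and>
        (\<forall>\<gamma>\<in>U. int (n_pos (signed_laplacian N \<gamma>)) = int (num_components N Ep) - 1 \<and>
                 n_neg (signed_laplacian N \<gamma>) = N - num_components N Ep \<and>
                 n_zero (signed_laplacian N \<gamma>) = 1))
    \<and> (\<exists>U. U \<noteq> {} \<and> weights_open E \<sigma> U \<and>
        (\<forall>\<gamma>\<in>U. n_pos (signed_laplacian N \<gamma>) = N - num_components N Em \<and>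
                 int (n_neg (signed_laplacian N \<gamma>)) = int (num_components N Em) - 1 \<and>
                 n_zero (signed_laplacian N \<gamma>) = 1))"
proof -
  interpret signed_graph N E \<sigma> using graph sym_sign conn by unfold_locales
  show ?thesis
    unfolding Ep_def Em_def using inertia_bounds_int extremal_neg_weights extremal_pos_weights
    by (intro conjI)
qed

end
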